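(* Suppose (A1) $\|\mu_a\|_\infty,\|\widehat\mu_a\|_\infty\le B<\infty$ a.s. for all $a$, (A2) $\max_a\|\widehat\mu_a-\mu_a\|_\infty=o_{\mathbb{P}}(1)$, and that $\mathbb{P}$ satisfies the margin condition with some $\kappa>0$ and $\alpha>0$. For every optimal codebook $C^*\in\mathcal{C}_k^*$, let $\phi_{C^*}(z;\mathbb{P})=\varphi_{C^*}(z;\mathbb{P})-\int\varphi_{C^*}(z;\mathbb{P})\,d\mathbb{P}(z)$, where $\varphi_{C^*}(z;\mathbb{P})=\varphi_{C^*}(z;\eta)$ is evaluated at the true nuisance functions $\eta$ of $\mathbb{P}$. Then $\phi_{C^*}$ is the efficient influence function (in the nonparametric model) for $R(C^* )$.
   Context: $Z=(Y,A,X)\sim\mathbb{P}$, $Y\in\mathbb{R}$, $A\in\mathcal{A}=\{1,\dots,p\}$, $X\in\mathbb{R}^d$. For $a\in\mathcal{A}$: $\mu_a(X)=\mathbb{E}(Y\mid X,A=a)$, $\pi_a(X)=\mathbb{P}(A=a\mid X)$, $\mu=(\mu_1(X),\dots,\mu_p(X))^\top$, $\eta_a=\{\pi_a,\mu_a\}$, $\eta=\{\eta_a\}_{a\in\mathcal{A}}$; $\widehat\mu$ is an estimator of $\mu$. Define $\varphi_{1,a}(Z;\eta_a)=\frac{\mathbb{1}(A=a)}{\pi_a(X)}\{Y-\mu_A(X)\}+\mu_a(X)$, $\varphi_{2,a}(Z;\eta_a)=2\mu_a(X)\frac{\mathbb{1}(A=a)}{\pi_a(X)}\{Y-\mu_A(X)\}+\mu_a^2(X)$,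 and for a codebook $C$, $\varphi_C(Z;\eta)=\sum_{a\in\mathcal{A}}\{\varphi_{2,a}(Z;\eta_a)-2\varphi_{1,a}(Z;\eta_a)[\Pi_C(\mu)]_a+[\Pi_C(\mu)]_a^2\}$, where $[\cdot]_a$ is the $a$-th coordinate. A codebook is $C=\{c_1,\dots,c_k\}\subset\mathbb{R}^p$; $\mathcal{C}_k$ the codebooks of size $k$ in the image of $\mu$; $\Pi_C(x)=\arg\min_{c\in C}\|c-x\|_2^2$; $R(C)=\mathbb{E}\|\mu-\Pi_C(\mu)\|_2^2$; $\mathcal{C}_k^*$ the set of minimizers of $R$. Voronoi cell $V_j(C^* )=\{x:\|x-c_j^*\|_2\le\|x-c_i^*\|_2\ \forall i\neq j\}$; $N_{C^*}(t)=\bigcup_j\{x\in V_j(C^* ):|\,\|x-c_j^*\|_2-\min_{i\ne j}\|x-c_i^*\|_2\,|\le t\}$. Margin condition (radius $\kappa$, rate $\alpha$): for $0\le t\le\kappa$, $\sup_{C^*\in\mathcal{C}_k^*}\mathbb{P}(\mu\in N_{C^*}(t))\lesssim t^\alpha$. *)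

theory Defs
  imports "HOL-Probability.Probability"
begin

text \<open>Observations Z = (Y, A, X) with Y real, A in a finite index type 'a (playing
 the role of {1..p}), X in a Euclidean space 'x (playing the role of R^d).\<close>

definition obsY :: "real \<times> 'a \<times> 'x \<Rightarrow> real" where "obsY z = fst z"
definition obsA :: "real \<times> 'a \<times> 'x \<Rightarrow> 'a" where "obsA z = fst (snd z)"
definition obsX :: "real \<times> 'a \<times> 'x \<Rightarrow> 'x" where "obsX z = snd (snd z)"

definition vecf :: "('a::finite \<Rightarrow> 'x \<Rightarrow> real) \<Rightarrow> 'x \<Rightarrow> real^'a" where
  "vecf m x = (\<chi> a. m a x)"

text \<open>Nearest codebook element (argmin; ties broken by an arbitrary fixed choice).\<close>
definition proj :: "(real^'a::finite) set \<Rightarrow> real^'a \<Rightarrow> real^'a" where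
  "proj C x = (SOME c. c \<in> C \<and> (\<forall>c'\<in>C. norm (x - c) \<le> norm (x - c')))"

text \<open>p is a version of the propensity score pi_a(x) = P(A = a | X = x) under Q.\<close>
definition is_propensity :: "(real \<times> 'a \<times> 'x::euclidean_space) measure \<Rightarrow> ('a \<Rightarrow> 'x \<Rightarrow> real) \<Rightarrow> bool" where
  "is_propensity Q p \<longleftrightarrow> (\<forall>a. p a \<in> borel_measurable borel \<and>
     (\<forall>S\<in>sets borel.
        integrable Q (\<lambda>z. p a (obsX z) * indicator S (obsX z)) \<and>
        measure Q {z\<in>space Q. obsA z = a \<and> obsX z \<in> S}
          = (\<integral>z. p a (obsX z) * indicator S (obsX z) \<partial>Q)))"

text \<open>m is a version of the regression mu_a(x) = E(Y | X = x, A = a) under Q.\<close>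
definition is_regression :: "(real \<times> 'a \<times> 'x::euclidean_space) measure \<Rightarrow> ('a \<Rightarrow> 'x \<Rightarrow> real) \<Rightarrow> bool" where
  "is_regression Q m \<longleftrightarrow> (\<forall>a. m a \<in> borel_measurable borel \<and>
     (\<forall>S\<in>sets borel.
        integrable Q (\<lambda>z. obsY z * indicator {a} (obsA z) * indicator S (obsX z)) \<and>
        integrable Q (\<lambda>z. m a (obsX z) * indicator {a} (obsA z) * indicator S (obsX z)) \<and>
        (\<integral>z. obsY z * indicator {a} (obsA z) * indicator S (obsX z) \<partial>Q)
          = (\<integral>z. m a (obsX z) * indicator {a} (obsA z) * indicator S (obsX z) \<partial>Q)))"

definition risk :: "(real \<times> 'a::finite \<times> 'x) measure \<Rightarrow> ('a \<Rightarrow> 'x \<Rightarrow> real) \<Rightarrow> (real^'a) set \<Rightarrow> real" where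
  "risk Q m C = (\<integral>z. (norm (vecf m (obsX z) - proj C (vecf m (obsX z))))\<^sup>2 \<partial>Q)"

definition psi :: "(real \<times> 'a::finite \<times> 'x::euclidean_space) measure \<Rightarrow> (real^'a) set \<Rightarrow> real" where
  "psi Q C = risk Q (SOME m. is_regression Q m) C"

definition codebooks :: "('a::finite \<Rightarrow> 'x \<Rightarrow> real) \<Rightarrow> nat \<Rightarrow> (real^'a) set set" where
  "codebooks m k = {C. finite C \<and> card C = k \<and> C \<subseteq> range (vecf m)}"

definition opt_codebooks :: "(real \<times> 'a::finite \<times> 'x) measure \<Rightarrow> ('a \<Rightarrow> 'x \<Rightarrow> real) \<Rightarrow> nat \<Rightarrow> (real^'a) set set" where
  "opt_codebooks Q m k = {C \<in> codebooks m k. \<forall>C'\<in>codebooks m k. risk Q m C \<le> risk Q m C'}"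

definition margin_nbhd :: "(real^'a::finite) set \<Rightarrow> real \<Rightarrow> (real^'a) set" where
  "margin_nbhd C t = {x. \<exists>c\<in>C. (\<forall>c'\<in>C. dist x c \<le> dist x c') \<and> C - {c} \<noteq> {} \<and>
      \<bar>dist x c - Min ((\<lambda>c'. dist x c') ` (C - {c}))\<bar> \<le> t}"

definition margin_condition :: "(real \<times> 'a::finite \<times> 'x) measure \<Rightarrow> ('a \<Rightarrow> 'x \<Rightarrow> real) \<Rightarrow> nat \<Rightarrow> real \<Rightarrow> real \<Rightarrow> bool" where
  "margin_condition Q m k \<kappa> \<alpha> \<longleftrightarrow> (\<exists>K. \<forall>t. 0 \<le> t \<and> t \<le> \<kappa> \<longrightarrow>
     (\<forall>C\<in>opt_codebooks Q m k.
        measure Q {z\<in>space Q. vecf m (obsX z) \<in> margin_nbhd C t} \<le> K * t powr \<alpha>))"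

definition varphi1 :: "('a \<Rightarrow> 'x \<Rightarrow> real) \<Rightarrow> ('a \<Rightarrow> 'x \<Rightarrow> real) \<Rightarrow> 'a \<Rightarrow> real \<times> 'a \<times> 'x \<Rightarrow> real" where
  "varphi1 p m a z = indicator {a} (obsA z) / p a (obsX z) * (obsY z - m (obsA z) (obsX z)) + m a (obsX z)"

definition varphi2 :: "('a \<Rightarrow> 'x \<Rightarrow> real) \<Rightarrow> ('a \<Rightarrow> 'x \<Rightarrow> real) \<Rightarrow> 'a \<Rightarrow> real \<times> 'a \<times> 'x \<Rightarrow> real" where
  "varphi2 p m a z = 2 * m a (obsX z) * (indicator {a} (obsA z) / p a (obsX z)) * (obsY z - m (obsA z) (obsX z))
      + (m a (obsX z))\<^sup>2"

definition varphiC :: "('a::finite \<Rightarrow> 'x \<Rightarrow> real) \<Rightarrow> ('a \<Rightarrow> 'x \<Rightarrow> real) \<Rightarrow> (real^'a) set \<Rightarrow> real \<times> 'a \<times> 'x \<Rightarrow> real" where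
  "varphiC p m C z = (\<Sum>a\<in>UNIV. varphi2 p m a z - 2 * varphi1 p m a z * (proj C (vecf m (obsX z))) $ a
      + ((proj C (vecf m (obsX z))) $ a)\<^sup>2)"

definition eif_nonpar :: "'z measure \<Rightarrow> ('z measure \<Rightarrow> real) \<Rightarrow> ('z \<Rightarrow> real) \<Rightarrow> bool" where
  "eif_nonpar P \<Psi> \<phi> \<longleftrightarrow>
     \<phi> \<in> borel_measurable P \<and> integrable P (\<lambda>z. (\<phi> z)\<^sup>2) \<and> (\<integral>z. \<phi> z \<partial>P) = 0 \<and>
     (\<forall>s. s \<in> borel_measurable P \<and> (\<exists>M. \<forall>z\<in>space P. \<bar>s z\<bar> \<le> M) \<and> (\<integral>z. s z \<partial>P) = 0 \<longrightarrow>
        ((\<lambda>t. \<Psi> (density P (\<lambda>z. ennreal (1 + t * s z)))) has_real_derivative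
           (\<integral>z. \<phi> z * s z \<partial>P)) (at 0))"

end

theory Submission
  imports Defs
begin

(*
  Along the submodel dP_t = (1 + t s) dP with a bounded mean-zero score s, Bayes' rule gives
  the regression mu_t(a, x) = (mu_a(x) + t H(a, x)) / (1 + t G(a, x)), where H and G are versions
  of E[Y s | A, X] and E[s | A, X]. Positivity makes mu_t unique almost everywhere, so
  R_{P_t}(C) = E_P[(1 + t s) d_C(mu_t(X))^2], where d_C is the distance to the codebook C.
  Under the margin condition ties between codewords are P-null; off a null set the nearest
  codeword is therefore locally constant in t and the integrand is differentiable at t = 0,
  while the 1-Lipschitz property of d_C gives an integrable bound on the difference quotients.
  The derivative E[d_C(mu(X))^2 s] + sum_a E[2 (mu_a - c_a)(X) (H - mu_a G)(a, X)] equals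
  E[varphi_C s] by the tower property over (A, X) and the definition of the propensity score.
*)

section \<open>Conditional expectation given an observed variable\<close>

lemma integrable_mult_bounded_AE:
  fixes f g :: "'m \<Rightarrow> real"
  assumes f: "integrable M f" and g: "g \<in> borel_measurable M" and bnd: "AE z in M. \<bar>g z\<bar> \<le> c"
  shows "integrable M (\<lambda>z. f z * g z)"
proof (rule Bochner_Integration.integrable_bound[of _ "\<lambda>z. c * f z"])
  show "integrable M (\<lambda>z. c * f z)" using f by simp
  show "(\<lambda>z. f z * g z) \<in> borel_measurable M" using f g by measurable
  show "AE z in M. norm (f z * g z) \<le> norm (c * f z)"
    using bnd
  proof eventually_elim
    case (elim z)
    have "\<bar>f z\<bar> * \<bar>g z\<bar> \<le> \<bar>f z\<bar> * c" using elim by (intro mult_left_mono) auto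
    also have "\<dots> \<le> \<bar>c\<bar> * \<bar>f z\<bar>" by (simp add: mult.commute mult_right_mono)
    finally show ?case by (simp add: abs_mult)
  qed
qed

lemma AE_nonpos_of_set_integrals_nonpos:
  fixes u :: "'s \<Rightarrow> real"
  assumes T: "T \<in> measurable M S" and u: "u \<in> borel_measurable S"
    and int: "integrable M (\<lambda>z. u (T z))"
    and le: "\<And>B. B \<in> sets S \<Longrightarrow> (\<integral>z. u (T z) * indicator B (T z) \<partial>M) \<le> 0"
  shows "AE z in M. u (T z) \<le> 0"
proof -
  define B where "B = {y \<in> space S. 0 < u y}"
  have B: "B \<in> sets S" unfolding B_def using u by measurable
  have "(\<lambda>z. indicator B (T z) :: real) \<in> borel_measurable M" using B T by measurable
  then have i: "integrable M (\<lambda>z. u (T z) * indicator B (T z))"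
    by (rule integrable_mult_bounded_AE[OF int, of _ 1]) (auto split: split_indicator)
  have nn: "AE z in M. 0 \<le> u (T z) * indicator B (T z)"
    by (rule AE_I2) (auto simp: B_def split: split_indicator)
  have "(\<integral>z. u (T z) * indicator B (T z) \<partial>M) = 0"
    using le[OF B] integral_nonneg_AE[OF nn] by linarith
  then have "AE z in M. u (T z) * indicator B (T z) = 0"
    using integral_nonneg_eq_0_iff_AE[OF i nn] by simp
  then show ?thesis
    by (rule AE_mp[OF _ AE_I2]) (use T in \<open>auto simp: B_def measurable_def split: split_indicator_asm\<close>)
qed

lemma AE_eq_of_set_integrals_eq:
  fixes g1 g2 :: "'s \<Rightarrow> real"
  assumes T: "T \<in> measurable M S" and g: "g1 \<in> borel_measurable S" "g2 \<in> borel_measurable S"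
    and int: "integrable M (\<lambda>z. g1 (T z))" "integrable M (\<lambda>z. g2 (T z))"
    and eq: "\<And>B. B \<in> sets S \<Longrightarrow>
      (\<integral>z. g1 (T z) * indicator B (T z) \<partial>M) = (\<integral>z. g2 (T z) * indicator B (T z) \<partial>M)"
  shows "AE z in M. g1 (T z) = g2 (T z)"
proof -
  have diff: "(\<integral>z. (h1 (T z) - h2 (T z)) * indicator B (T z) \<partial>M) = 0"
    if "B \<in> sets S" "integrable M (\<lambda>z. h1 (T z))" "integrable M (\<lambda>z. h2 (T z))"
       "(\<integral>z. h1 (T z) * indicator B (T z) \<partial>M) = (\<integral>z. h2 (T z) * indicator B (T z) \<partial>M)"
    for h1 h2 :: "'s \<Rightarrow> real" and B
  proof -
    have "(\<lambda>z. indicator B (T z) :: real) \<in> borel_measurable M" using that(1) T by measurable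
    then have "integrable M (\<lambda>z. h1 (T z) * indicator B (T z))" "integrable M (\<lambda>z. h2 (T z) * indicator B (T z))"
      using that(2,3) by (auto intro!: integrable_mult_bounded_AE[of _ _ _ 1] split: split_indicator)
    then show ?thesis using that(4) by (simp add: left_diff_distrib)
  qed
  have "AE z in M. g1 (T z) - g2 (T z) \<le> 0"
    using T g int diff[OF _ int eq] by (intro AE_nonpos_of_set_integrals_nonpos[where u="\<lambda>y. g1 y - g2 y"]) auto
  moreover have "AE z in M. g2 (T z) - g1 (T z) \<le> 0"
    using T g int diff[OF _ int(2,1) eq[symmetric]]
    by (intro AE_nonpos_of_set_integrals_nonpos[where u="\<lambda>y. g2 y - g1 y"]) auto
  ultimately show ?thesis by eventually_elim simp
qed

definition is_cond_exp_fun :: "'m measure \<Rightarrow> ('m \<Rightarrow> 's) \<Rightarrow> 's measure \<Rightarrow> ('m \<Rightarrow> real) \<Rightarrow> ('s \<Rightarrow> real) \<Rightarrow> bool"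
  where "is_cond_exp_fun M T S w g \<longleftrightarrow> g \<in> borel_measurable S \<and> (\<forall>f. f \<in> borel_measurable S \<longrightarrow>
    integrable M (\<lambda>z. w z * f (T z)) \<longrightarrow>
    integrable M (\<lambda>z. g (T z) * f (T z)) \<and> (\<integral>z. w z * f (T z) \<partial>M) = (\<integral>z. g (T z) * f (T z) \<partial>M))"

lemma finite_measure_density_integrable:
  fixes w :: "'m \<Rightarrow> real"
  assumes "w \<in> borel_measurable M" "\<And>z. 0 \<le> w z" "integrable M w"
  shows "finite_measure (density M w)"
proof (rule finite_measureI)
  have "emeasure (density M w) (space M) = (\<integral>\<^sup>+z. ennreal (w z) * indicator (space M) z \<partial>M)"
    using assms(1) by (intro emeasure_density) auto
  also have "\<dots> = (\<integral>\<^sup>+z. ennreal (w z) \<partial>M)"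
    by (rule nn_integral_cong) simp
  also have "\<dots> = ennreal (\<integral>z. w z \<partial>M)"
    using assms by (intro nn_integral_eq_integral) auto
  finally show "emeasure (density M w) (space (density M w)) \<noteq> \<infinity>" by simp
qed

lemma absolutely_continuous_distr_density:
  fixes w :: "'m \<Rightarrow> real"
  assumes T: "T \<in> measurable M S" and w: "w \<in> borel_measurable M"
  shows "absolutely_continuous (distr M S T) (distr (density M w) S T)"
  unfolding absolutely_continuous_def
proof
  fix A assume "A \<in> null_sets (distr M S T)"
  then have A: "A \<in> sets S" "T -` A \<inter> space M \<in> null_sets M"
    using T by (auto simp: null_sets_def emeasure_distr)
  then have "T -` A \<inter> space M \<in> null_sets (density M w)"
    using absolutely_continuousI_density[of "\<lambda>z. ennreal (w z)" M] w
    unfolding absolutely_continuous_def by auto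
  then show "A \<in> null_sets (distr (density M w) S T)"
    using A T by (simp add: null_sets_def emeasure_distr)
qed

lemma cond_exp_nonneg_ex:
  fixes w :: "'m \<Rightarrow> real" and T :: "'m \<Rightarrow> 's"
  assumes M: "finite_measure M" and T: "T \<in> measurable M S"
    and w: "w \<in> borel_measurable M" "\<And>z. 0 \<le> w z" "integrable M w"
  obtains g where "g \<in> borel_measurable S"
    "\<And>f. f \<in> borel_measurable S \<Longrightarrow>
       integrable M (\<lambda>z. w z * f (T z)) \<longleftrightarrow> integrable M (\<lambda>z. g (T z) * f (T z))"
    "\<And>f. f \<in> borel_measurable S \<Longrightarrow> (\<integral>z. w z * f (T z) \<partial>M) = (\<integral>z. g (T z) * f (T z) \<partial>M)"
proof -
  interpret M: finite_measure M by fact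
  define L where "L = distr M S T"
  define N where "N = distr (density M w) S T"
  interpret L: finite_measure L unfolding L_def by (rule M.finite_measure_distr[OF T])
  have sets_N: "sets N = sets L" unfolding N_def L_def by simp
  have T_density: "T \<in> measurable (density M w) S" using T by simp
  have "finite_measure N"
    unfolding N_def
    by (rule finite_measure.finite_measure_distr[OF finite_measure_density_integrable[OF w] T_density])
  note sf_N = finite_measure.sigma_finite_measure[OF this]
  have ac: "absolutely_continuous L N"
    unfolding L_def N_def by (rule absolutely_continuous_distr_density[OF T w(1)])
  define g where "g y = enn2real (RN_deriv L N y)" for y
  have g_meas: "g \<in> borel_measurable S"
    unfolding g_def using borel_measurable_RN_deriv[of L N] unfolding L_def by simp
  show ?thesis
  proof
    show "g \<in> borel_measurable S" by (rule g_meas)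
  next
    fix f :: "'s \<Rightarrow> real" assume f: "f \<in> borel_measurable S"
    have fL: "f \<in> borel_measurable L" using f unfolding L_def by simp
    have "integrable N f \<longleftrightarrow> integrable L (\<lambda>y. g y * f y)"
      unfolding g_def using L.RN_deriv_integrable[OF sf_N ac sets_N fL] .
    moreover have "integrable N f \<longleftrightarrow> integrable M (\<lambda>z. w z * f (T z))"
      unfolding N_def using f T_density w by (simp add: integrable_distr_eq integrable_density)
    moreover have "integrable L (\<lambda>y. g y * f y) \<longleftrightarrow> integrable M (\<lambda>z. g (T z) * f (T z))"
      unfolding L_def using f T g_meas by (subst integrable_distr_eq) auto
    ultimately show "integrable M (\<lambda>z. w z * f (T z)) \<longleftrightarrow> integrable M (\<lambda>z. g (T z) * f (T z))"
      by simp
    have "integral\<^sup>L N f = (\<integral>y. g y * f y \<partial>L)"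
      unfolding g_def using L.RN_deriv_integral[OF sf_N ac sets_N fL] .
    moreover have "integral\<^sup>L N f = (\<integral>z. w z * f (T z) \<partial>M)"
      unfolding N_def using f T_density w by (simp add: integral_distr integral_density)
    moreover have "(\<integral>y. g y * f y \<partial>L) = (\<integral>z. g (T z) * f (T z) \<partial>M)"
      unfolding L_def using f T g_meas by (subst integral_distr) auto
    ultimately show "(\<integral>z. w z * f (T z) \<partial>M) = (\<integral>z. g (T z) * f (T z) \<partial>M)" by simp
  qed
qed

lemma cond_exp_ex:
  fixes w :: "'m \<Rightarrow> real" and T :: "'m \<Rightarrow> 's"
  assumes M: "finite_measure M" and T: "T \<in> measurable M S"
    and w: "w \<in> borel_measurable M" "integrable M w"
  shows "\<exists>g. is_cond_exp_fun M T S w g"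
proof -
  obtain g1 where g1: "g1 \<in> borel_measurable S"
    "\<And>f. f \<in> borel_measurable S \<Longrightarrow>
      integrable M (\<lambda>z. max 0 (w z) * f (T z)) \<longleftrightarrow> integrable M (\<lambda>z. g1 (T z) * f (T z))"
    "\<And>f. f \<in> borel_measurable S \<Longrightarrow>
      (\<integral>z. max 0 (w z) * f (T z) \<partial>M) = (\<integral>z. g1 (T z) * f (T z) \<partial>M)"
    by (rule cond_exp_nonneg_ex[OF M T, of "\<lambda>z. max 0 (w z)"]) (use w in auto)
  obtain g2 where g2: "g2 \<in> borel_measurable S"
    "\<And>f. f \<in> borel_measurable S \<Longrightarrow>
      integrable M (\<lambda>z. max 0 (- w z) * f (T z)) \<longleftrightarrow> integrable M (\<lambda>z. g2 (T z) * f (T z))"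
    "\<And>f. f \<in> borel_measurable S \<Longrightarrow>
      (\<integral>z. max 0 (- w z) * f (T z) \<partial>M) = (\<integral>z. g2 (T z) * f (T z) \<partial>M)"
    by (rule cond_exp_nonneg_ex[OF M T, of "\<lambda>z. max 0 (- w z)"]) (use w in auto)
  have "integrable M (\<lambda>z. (g1 (T z) - g2 (T z)) * f (T z)) \<and>
      (\<integral>z. w z * f (T z) \<partial>M) = (\<integral>z. (g1 (T z) - g2 (T z)) * f (T z) \<partial>M)"
    if f: "f \<in> borel_measurable S" and int: "integrable M (\<lambda>z. w z * f (T z))" for f
  proof -
    have fT: "(\<lambda>z. f (T z)) \<in> borel_measurable M" using f T by measurable
    have "integrable M (\<lambda>z. max 0 (w z) * f (T z))"
      by (rule Bochner_Integration.integrable_bound[OF int])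
        (use fT w in \<open>auto simp: abs_mult intro!: AE_I2 mult_right_mono\<close>)
    moreover have "integrable M (\<lambda>z. max 0 (- w z) * f (T z))"
      by (rule Bochner_Integration.integrable_bound[OF int])
        (use fT w in \<open>auto simp: abs_mult intro!: AE_I2 mult_right_mono\<close>)
    moreover have "w z * f (T z) = max 0 (w z) * f (T z) - max 0 (- w z) * f (T z)" for z
      by (simp add: max_def algebra_simps)
    ultimately show ?thesis
      using g1(2,3)[OF f] g2(2,3)[OF f] by (simp add: left_diff_distrib)
  qed
  then show ?thesis
    using g1(1) g2(1) unfolding is_cond_exp_fun_def by (intro exI[of _ "\<lambda>y. g1 y - g2 y"]) auto
qed

definition cond_exp_fun :: "'m measure \<Rightarrow> ('m \<Rightarrow> 's) \<Rightarrow> 's measure \<Rightarrow> ('m \<Rightarrow> real) \<Rightarrow> 's \<Rightarrow> real" where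
  "cond_exp_fun M T S w = (SOME g. is_cond_exp_fun M T S w g)"

context
  fixes M :: "'m measure" and T :: "'m \<Rightarrow> 's" and S :: "'s measure" and w :: "'m \<Rightarrow> real"
  assumes M: "finite_measure M" and T: "T \<in> measurable M S"
    and w: "w \<in> borel_measurable M" "integrable M w"
begin

lemma is_cond_exp_fun_cond_exp_fun: "is_cond_exp_fun M T S w (cond_exp_fun M T S w)"
  unfolding cond_exp_fun_def by (rule someI_ex[OF cond_exp_ex[OF M T w]])

lemma borel_measurable_cond_exp_fun: "cond_exp_fun M T S w \<in> borel_measurable S"
  using is_cond_exp_fun_cond_exp_fun unfolding is_cond_exp_fun_def by blast

lemma integrable_cond_exp_fun:
  "f \<in> borel_measurable S \<Longrightarrow> integrable M (\<lambda>z. w z * f (T z)) \<Longrightarrow>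
    integrable M (\<lambda>z. cond_exp_fun M T S w (T z) * f (T z))"
  using is_cond_exp_fun_cond_exp_fun unfolding is_cond_exp_fun_def by blast

lemma integral_cond_exp_fun:
  "f \<in> borel_measurable S \<Longrightarrow> integrable M (\<lambda>z. w z * f (T z)) \<Longrightarrow>
    (\<integral>z. w z * f (T z) \<partial>M) = (\<integral>z. cond_exp_fun M T S w (T z) * f (T z) \<partial>M)"
  using is_cond_exp_fun_cond_exp_fun unfolding is_cond_exp_fun_def by blast

lemma integrable_cond_exp_fun_bounded:
  assumes "f \<in> borel_measurable S" "\<And>y. \<bar>f y\<bar> \<le> K"
  shows "integrable M (\<lambda>z. w z * f (T z))"
  using assms T by (intro integrable_mult_bounded_AE[OF w(2), of _ K]) auto

lemma AE_abs_cond_exp_fun_le: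
  assumes bnd: "AE z in M. \<bar>w z\<bar> \<le> c"
  shows "AE z in M. \<bar>cond_exp_fun M T S w (T z)\<bar> \<le> c"
proof -
  interpret finite_measure M by (rule M)
  let ?g = "cond_exp_fun M T S w"
  have g_meas: "?g \<in> borel_measurable S" by (rule borel_measurable_cond_exp_fun)
  have g_int: "integrable M (\<lambda>z. ?g (T z))"
    using integrable_cond_exp_fun[of "\<lambda>_. 1"] w by simp
  have signed: "AE z in M. \<sigma> * ?g (T z) - c \<le> 0" if \<sigma>: "\<bar>\<sigma>\<bar> \<le> 1" for \<sigma>
  proof (rule AE_nonpos_of_set_integrals_nonpos[OF T, where u="\<lambda>y. \<sigma> * ?g y - c"])
    show "(\<lambda>y. \<sigma> * ?g y - c) \<in> borel_measurable S" using g_meas by measurable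
    show "integrable M (\<lambda>z. \<sigma> * ?g (T z) - c)" using g_int by simp
    fix B assume B: "B \<in> sets S"
    have ind_meas: "indicator B \<in> borel_measurable S" using B by simp
    have ind_bnd: "\<And>y. \<bar>indicator B y :: real\<bar> \<le> 1" by (simp split: split_indicator)
    note wB = integrable_cond_exp_fun_bounded[OF ind_meas ind_bnd]
    have iB: "integrable M (\<lambda>z. indicator B (T z) :: real)"
      using B T by (intro integrable_const_bound[where B=1]) (auto split: split_indicator)
    have "(\<integral>z. (\<sigma> * ?g (T z) - c) * indicator B (T z) \<partial>M)
        = \<sigma> * (\<integral>z. ?g (T z) * indicator B (T z) \<partial>M) - c * (\<integral>z. indicator B (T z) \<partial>M)"
      using integrable_cond_exp_fun[OF ind_meas wB] iB by (simp add: left_diff_distrib mult.assoc)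
    also have "\<dots> = (\<integral>z. (\<sigma> * w z - c) * indicator B (T z) \<partial>M)"
      using integral_cond_exp_fun[OF ind_meas wB] wB iB by (simp add: left_diff_distrib mult.assoc)
    also have "\<dots> \<le> (\<integral>z. 0 \<partial>M)"
    proof (rule integral_mono_AE)
      show "integrable M (\<lambda>z. (\<sigma> * w z - c) * indicator B (T z))"
        using wB iB by (simp add: left_diff_distrib mult.assoc)
      show "AE z in M. (\<sigma> * w z - c) * indicator B (T z) \<le> 0"
        using bnd
      proof eventually_elim
        case (elim z)
        have "\<sigma> * w z \<le> \<bar>\<sigma>\<bar> * \<bar>w z\<bar>" by (metis abs_ge_self abs_mult)
        also have "\<dots> \<le> c" using \<sigma> elim by (metis abs_ge_zero mult_left_le_one_le order.trans)
        finally show ?case by (simp split: split_indicator)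
      qed
    qed simp
    finally show "(\<integral>z. (\<sigma> * ?g (T z) - c) * indicator B (T z) \<partial>M) \<le> 0" by simp
  qed
  have "AE z in M. 1 * ?g (T z) - c \<le> 0" "AE z in M. -1 * ?g (T z) - c \<le> 0"
    by (rule signed; simp)+
  then show ?thesis by eventually_elim auto
qed

lemma integral_square_truncation_le:
  assumes f: "f \<in> borel_measurable S" "\<And>y. \<bar>f y\<bar> \<le> K"
    and trunc: "\<And>y. f y * f y = cond_exp_fun M T S w y * f y"
    and w2: "integrable M (\<lambda>z. (w z)\<^sup>2)"
  shows "(\<integral>z. (f (T z))\<^sup>2 \<partial>M) \<le> (\<integral>z. (w z)\<^sup>2 \<partial>M)"
proof -
  interpret finite_measure M by (rule M)
  have f_int: "integrable M (\<lambda>z. (f (T z))\<^sup>2)"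
    using f T by (intro integrable_const_bound[where B="K\<^sup>2"])
      (auto intro!: power_mono simp: abs_le_square_iff[symmetric] order.trans[OF _ abs_ge_self])
  have wf: "integrable M (\<lambda>z. w z * f (T z))"
    by (rule integrable_cond_exp_fun_bounded[OF f])
  have "(\<integral>z. (f (T z))\<^sup>2 \<partial>M) = (\<integral>z. w z * f (T z) \<partial>M)"
    using integral_cond_exp_fun[OF f(1) wf] by (simp add: power2_eq_square trunc)
  also have "\<dots> \<le> (\<integral>z. ((w z)\<^sup>2 + (f (T z))\<^sup>2) / 2 \<partial>M)"
  proof (rule integral_mono[OF wf])
    show "integrable M (\<lambda>z. ((w z)\<^sup>2 + (f (T z))\<^sup>2) / 2)" using w2 f_int by simp
    show "w z * f (T z) \<le> ((w z)\<^sup>2 + (f (T z))\<^sup>2) / 2" for z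
      using sum_squares_bound[of "w z" "f (T z)"] by (simp add: field_simps)
  qed
  also have "\<dots> = ((\<integral>z. (w z)\<^sup>2 \<partial>M) + (\<integral>z. (f (T z))\<^sup>2 \<partial>M)) / 2"
    using w2 f_int by simp
  finally show ?thesis by simp
qed

lemma square_integrable_cond_exp_fun:
  assumes w2: "integrable M (\<lambda>z. (w z)\<^sup>2)"
  shows "integrable M (\<lambda>z. (cond_exp_fun M T S w (T z))\<^sup>2)"
proof -
  interpret finite_measure M by (rule M)
  let ?g = "cond_exp_fun M T S w"
  have [measurable]: "?g \<in> borel_measurable S" "T \<in> measurable M S"
    by (rule borel_measurable_cond_exp_fun T)+
  define trunc where "trunc n y = ?g y * indicator {y. \<bar>?g y\<bar> \<le> real n} y" for n y
  have trunc_meas[measurable]: "trunc n \<in> borel_measurable S" for n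
    unfolding trunc_def by measurable
  have "(\<lambda>n. \<integral>\<^sup>+z. ennreal ((trunc n (T z))\<^sup>2) \<partial>M) \<longlonglongrightarrow> (\<integral>\<^sup>+z. ennreal ((?g (T z))\<^sup>2) \<partial>M)"
  proof (rule nn_integral_LIMSEQ)
    show "incseq (\<lambda>n z. ennreal ((trunc n (T z))\<^sup>2))"
      by (auto simp: incseq_def le_fun_def trunc_def split: split_indicator)
    show "(\<lambda>z. ennreal ((trunc n (T z))\<^sup>2)) \<in> borel_measurable M" for n by measurable
    fix z
    obtain N :: nat where N: "\<bar>?g (T z)\<bar> \<le> real N" using real_arch_simple by blast
    have "eventually (\<lambda>n. ennreal ((trunc n (T z))\<^sup>2) = ennreal ((?g (T z))\<^sup>2)) sequentially"
      using eventually_ge_at_top[of N]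
      by eventually_elim (use N in \<open>auto simp: trunc_def split: split_indicator\<close>)
    then show "(\<lambda>n. ennreal ((trunc n (T z))\<^sup>2)) \<longlonglongrightarrow> ennreal ((?g (T z))\<^sup>2)"
      by (rule tendsto_eventually)
  qed
  moreover have "(\<integral>\<^sup>+z. ennreal ((trunc n (T z))\<^sup>2) \<partial>M) \<le> ennreal (\<integral>z. (w z)\<^sup>2 \<partial>M)" for n
  proof -
    have bnd: "\<bar>trunc n y\<bar> \<le> real n" for y
      by (auto simp: trunc_def split: split_indicator)
    have "(\<integral>z. (trunc n (T z))\<^sup>2 \<partial>M) \<le> (\<integral>z. (w z)\<^sup>2 \<partial>M)"
      by (rule integral_square_truncation_le[OF trunc_meas bnd _ w2])
        (simp add: trunc_def split: split_indicator)
    moreover have "integrable M (\<lambda>z. (trunc n (T z))\<^sup>2)"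
      by (intro integrable_const_bound[where B="real n ^ 2"])
        (auto intro!: power_mono simp: bnd abs_le_square_iff[symmetric])
    ultimately show ?thesis by (simp add: nn_integral_eq_integral ennreal_leI)
  qed
  ultimately have "(\<integral>\<^sup>+z. ennreal ((?g (T z))\<^sup>2) \<partial>M) \<le> ennreal (\<integral>z. (w z)\<^sup>2 \<partial>M)"
    by (intro LIMSEQ_le_const2) auto
  then show ?thesis
    by (intro integrableI_nonneg) (auto simp: le_less_trans)
qed

end

section \<open>Nearest-codeword projection\<close>

lemma power2_norm_vec: "(norm (v :: real^'a::finite))\<^sup>2 = (\<Sum>a\<in>UNIV. (v $ a)\<^sup>2)"
  unfolding power2_norm_eq_inner inner_vec_def by (simp add: power2_eq_square)

lemma borel_measurable_vec_lambda[measurable]: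
  fixes f :: "'m \<Rightarrow> 'a::finite \<Rightarrow> real"
  assumes "\<And>a. (\<lambda>z. f z a) \<in> borel_measurable M"
  shows "(\<lambda>z. (\<chi> a. f z a) :: real^'a) \<in> borel_measurable M"
proof (subst borel_measurable_euclidean_space, intro ballI)
  fix i :: "real^'a" assume "i \<in> Basis"
  then obtain j where "i = axis j 1" by (auto simp: Basis_vec_def)
  then show "(\<lambda>z. (\<chi> a. f z a) \<bullet> i) \<in> borel_measurable M"
    using assms by (simp add: inner_axis)
qed

lemma borel_measurable_vecf[measurable]:
  "(\<And>a. m a \<in> borel_measurable borel) \<Longrightarrow> vecf m \<in> borel_measurable borel"
  unfolding vecf_def[abs_def] by (rule borel_measurable_vec_lambda) simp

lemma proj_spec:
  fixes C :: "(real^'a::finite) set"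
  assumes "finite C" "C \<noteq> {}"
  shows "proj C v \<in> C \<and> (\<forall>c\<in>C. norm (v - proj C v) \<le> norm (v - c))"
proof -
  have "Min ((\<lambda>c. norm (v - c)) ` C) \<in> (\<lambda>c. norm (v - c)) ` C"
    using assms by (intro Min_in) auto
  then obtain c where "c \<in> C" "norm (v - c) = Min ((\<lambda>c. norm (v - c)) ` C)"
    by auto
  with assms have "c \<in> C \<and> (\<forall>c'\<in>C. norm (v - c) \<le> norm (v - c'))" by auto
  then show ?thesis unfolding proj_def by (rule someI)
qed

lemma norm_proj_le_norm_proj:
  assumes "finite C"
  shows "norm (u - proj C u) \<le> norm (u - proj C v)"
proof (cases "C = {}")
  case True
  then show ?thesis by (simp add: proj_def)
next
  case False
  then show ?thesis using proj_spec[OF assms False, of v] proj_spec[OF assms False, of u] by blast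
qed

lemma abs_norm_proj_diff_le:
  assumes "finite C"
  shows "\<bar>norm (u - proj C u) - norm (v - proj C v)\<bar> \<le> norm (u - v)"
proof -
  have "norm (x - proj C x) \<le> norm (x - y) + norm (y - proj C y)" for x y
    using norm_proj_le_norm_proj[OF assms, of x y] norm_triangle_ineq[of "x - y" "y - proj C y"]
    by simp
  from this[of u v] this[of v u] show ?thesis by (simp add: norm_minus_commute)
qed

lemma bounded_proj: "finite C \<Longrightarrow> \<exists>R. \<forall>v. norm (proj C v) \<le> R"
proof (cases "C = {}")
  case True
  then show ?thesis by (auto simp: proj_def)
next
  case False
  assume "finite C"
  then have "norm (proj C v) \<le> Max (norm ` C)" for v
    using proj_spec[OF \<open>finite C\<close> False] by (auto intro: Max_ge)
  then show ?thesis by blast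
qed

lemma borel_measurable_norm_proj[measurable]:
  "finite C \<Longrightarrow> (\<lambda>v. norm (v - proj C v)) \<in> borel_measurable borel"
  by (intro borel_measurable_continuous_onI lipschitz_on_continuous_on[where L=1])
    (auto simp: lipschitz_on_def dist_real_def dist_norm abs_norm_proj_diff_le)

definition nearest_points :: "(real^'a::finite) set \<Rightarrow> real^'a \<Rightarrow> (real^'a) set" where
  "nearest_points C v = {c\<in>C. \<forall>c'\<in>C. norm (v - c) \<le> norm (v - c')}"

lemma measurable_nearest_points:
  assumes C: "finite C"
  shows "nearest_points C \<in> measurable borel (count_space (Pow C))"
proof -
  have "nearest_points C -` {D} = {v. \<forall>c\<in>C. c \<in> D \<longleftrightarrow> (\<forall>c'\<in>C. norm (v - c) \<le> norm (v - c'))}"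
    if "D \<in> Pow C" for D
    using that unfolding nearest_points_def by auto
  moreover have "Measurable.pred borel (\<lambda>v. \<forall>c\<in>C. c \<in> D \<longleftrightarrow> (\<forall>c'\<in>C. norm (v - c) \<le> norm (v - c')))"
    for D
    using C by measurable
  ultimately show ?thesis
    using C by (subst measurable_count_space_eq2) (auto simp: nearest_points_def pred_def)
qed

lemma borel_measurable_proj[measurable]:
  assumes "finite C"
  shows "proj C \<in> borel_measurable borel"
proof -
  have "proj C = (\<lambda>D. SOME c. c \<in> D) \<circ> nearest_points C"
    unfolding proj_def nearest_points_def by auto
  moreover have "(\<lambda>D. SOME c. c \<in> D) \<in> measurable (count_space (Pow C)) (borel :: (real^'a) measure)"
    by simp
  ultimately show ?thesis using measurable_nearest_points[OF assms] by simp
qed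

definition unique_nearest :: "(real^'a::finite) set \<Rightarrow> real^'a \<Rightarrow> bool" where
  "unique_nearest C v \<longleftrightarrow> C = {} \<or> (\<exists>c\<in>C. \<forall>c'\<in>C. c' \<noteq> c \<longrightarrow> norm (v - c) < norm (v - c'))"

lemma proj_eq_strictly_nearest:
  fixes C :: "(real^'a::finite) set"
  assumes C: "finite C" and c: "c \<in> C" and strict: "\<forall>c'\<in>C. c' \<noteq> c \<longrightarrow> norm (v - c) < norm (v - c')"
  shows "proj C v = c"
  using proj_spec[OF C, of v] c strict by force

lemma eventually_proj_eq:
  fixes C :: "(real^'a::finite) set"
  assumes C: "finite C"
    and unique: "unique_nearest C v0"
  shows "eventually (\<lambda>v. proj C v = proj C v0) (nhds v0)"
proof (cases "C = {}")
  case True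
  then show ?thesis by (simp add: proj_def)
next
  case False
  with unique obtain c where c: "c \<in> C" "\<forall>c'\<in>C. c' \<noteq> c \<longrightarrow> norm (v0 - c) < norm (v0 - c')"
    unfolding unique_nearest_def by auto
  have "eventually (\<lambda>v. norm (v - c) < norm (v - c')) (nhds v0)" if "c' \<in> C - {c}" for c'
  proof -
    have "((\<lambda>v. norm (v - c') - norm (v - c)) \<longlongrightarrow> norm (v0 - c') - norm (v0 - c)) (nhds v0)"
      by (intro tendsto_intros filterlim_ident)
    moreover have "norm (v0 - c') - norm (v0 - c) > 0" using c that by auto
    ultimately have "eventually (\<lambda>v. norm (v - c') - norm (v - c) > 0) (nhds v0)"
      by (rule order_tendstoD(1))
    then show ?thesis by (rule eventually_mono) simp
  qed
  then have "eventually (\<lambda>v. \<forall>c'\<in>C - {c}. norm (v - c) < norm (v - c')) (nhds v0)"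
    using C by (intro eventually_ball_finite) auto
  then show ?thesis
    by (rule eventually_mono) (use proj_eq_strictly_nearest[OF C c(1)] c(2) in auto)
qed

lemma unique_nearest_if_notin_margin_nbhd:
  fixes C :: "(real^'a::finite) set"
  assumes C: "finite C" and v: "v \<notin> margin_nbhd C 0"
  shows "unique_nearest C v"
proof (rule ccontr)
  assume no_unique: "\<not> ?thesis"
  then have "C \<noteq> {}" unfolding unique_nearest_def by blast
  define c where "c = proj C v"
  have c: "c \<in> C" "\<forall>c'\<in>C. dist v c \<le> dist v c'"
    using proj_spec[OF C \<open>C \<noteq> {}\<close>, of v] unfolding c_def by (auto simp: dist_norm)
  then obtain c' where c': "c' \<in> C" "c' \<noteq> c" "dist v c' \<le> dist v c"
    using no_unique unfolding unique_nearest_def by (auto simp: not_less dist_norm)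
  have "Min ((\<lambda>c'. dist v c') ` (C - {c})) \<le> dist v c'"
    using c' C by (intro Min_le) auto
  moreover have "dist v c \<le> Min ((\<lambda>c'. dist v c') ` (C - {c}))"
    using c c' C by (subst Min_ge_iff) auto
  ultimately have "v \<in> margin_nbhd C 0"
    unfolding margin_nbhd_def using c c' by (intro CollectI bexI[of _ c]) auto
  with v show False by simp
qed

lemma margin_nbhd_borel:
  fixes C :: "(real^'a::finite) set"
  assumes C: "finite C"
  shows "margin_nbhd C t \<in> sets borel"
proof -
  have [measurable]: "(\<lambda>x::real^'a. dist x c) \<in> borel_measurable borel" for c
    by (intro borel_measurable_continuous_onI continuous_intros)
  have [measurable]: "(\<lambda>x::real^'a. Min ((\<lambda>c'. dist x c') ` (C - {c}))) \<in> borel_measurable borel" for c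
    using C by (intro borel_measurable_Min) auto
  have "Measurable.pred borel (\<lambda>x. \<exists>c\<in>C. (\<forall>c'\<in>C. dist x c \<le> dist x c') \<and> C - {c} \<noteq> {} \<and>
      \<bar>dist x c - Min ((\<lambda>c'. dist x c') ` (C - {c}))\<bar> \<le> t)"
    using C by measurable
  then show ?thesis unfolding margin_nbhd_def by (simp add: pred_def)
qed

section \<open>The observational model\<close>

text \<open>The margin condition enters only through its instance t = 0, the assumption no_ties.\<close>

locale counterfactual_clustering = prob_space P
  for P :: "(real \<times> 'a::finite \<times> 'x::euclidean_space) measure" +
  fixes mu pi :: "'a \<Rightarrow> 'x \<Rightarrow> real" and \<epsilon> B :: real and Cs :: "(real^'a) set"
  assumes sets_P: "sets P = sets (borel \<Otimes>\<^sub>M (count_space UNIV \<Otimes>\<^sub>M borel))"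
    and Y_L2: "integrable P (\<lambda>z. (obsY z)\<^sup>2)"
    and propens: "is_propensity P pi"
    and regr: "is_regression P mu"
    and eps: "\<epsilon> > 0" and pos: "\<forall>a. AE z in P. pi a (obsX z) \<ge> \<epsilon>"
    and mu_bounded: "AE z in P. \<forall>a. \<bar>mu a (obsX z)\<bar> \<le> B"
    and finite_Cs: "finite Cs"
    and no_ties: "AE z in P. vecf mu (obsX z) \<notin> margin_nbhd Cs 0"
begin

abbreviation AX :: "('a \<times> 'x) measure" where
  "AX \<equiv> count_space UNIV \<Otimes>\<^sub>M borel"

lemma measurable_P: "measurable P N = measurable (borel \<Otimes>\<^sub>M AX) N"
  by (rule measurable_cong_sets[OF sets_P refl])

lemma space_P: "space P = UNIV"
  using sets_eq_imp_space_eq[OF sets_P] by (simp add: space_pair_measure)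

lemma measurable_obs[measurable]:
  "obsY \<in> borel_measurable P" "obsX \<in> measurable P borel"
  "obsA \<in> measurable P (count_space UNIV)" "snd \<in> measurable P AX"
  unfolding measurable_P obsY_def[abs_def] obsX_def[abs_def] obsA_def[abs_def] by measurable

lemma snd_obs: "snd z = (obsA z, obsX z)"
  by (simp add: obsA_def obsX_def)

lemma borel_measurable_mu_pi[measurable]:
  "mu a \<in> borel_measurable borel" "pi a \<in> borel_measurable borel"
  using regr propens unfolding is_regression_def is_propensity_def by auto

lemma borel_measurable_AX_split:
  "(\<And>a. m a \<in> borel_measurable borel) \<Longrightarrow> (\<lambda>y. m (fst y) (snd y)) \<in> borel_measurable AX"
  by (rule measurable_compose_countable'[where I=UNIV]) auto

lemma integrable_Y: "integrable P obsY"
  by (rule square_integrable_imp_integrable[OF _ Y_L2]) simp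

lemma AE_bounded_positive: "AE z in P. \<forall>a. \<bar>mu a (obsX z)\<bar> \<le> B \<and> \<epsilon> \<le> pi a (obsX z)"
proof -
  have "AE z in P. \<forall>a. \<epsilon> \<le> pi a (obsX z)" using pos by (simp add: AE_all_countable)
  with mu_bounded show ?thesis by eventually_elim auto
qed

lemma integral_treated_indicator:
  assumes E: "E \<in> sets borel"
  shows "integrable P (\<lambda>z. pi a (obsX z) * indicator E (obsX z))"
    "(\<integral>z. indicator {a} (obsA z) * indicator E (obsX z) \<partial>P) = (\<integral>z. pi a (obsX z) * indicator E (obsX z) \<partial>P)"
proof -
  show "integrable P (\<lambda>z. pi a (obsX z) * indicator E (obsX z))"
    using propens E unfolding is_propensity_def by auto
  have "{z\<in>space P. obsA z = a \<and> obsX z \<in> E} \<in> sets P" using E by measurable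
  then have "measure P {z\<in>space P. obsA z = a \<and> obsX z \<in> E}
      = (\<integral>z. indicator {z\<in>space P. obsA z = a \<and> obsX z \<in> E} z \<partial>P)"
    by simp
  also have "\<dots> = (\<integral>z. indicator {a} (obsA z) * indicator E (obsX z) \<partial>P)"
    by (intro Bochner_Integration.integral_cong) (auto simp: space_P split: split_indicator)
  finally have "(\<integral>z. indicator {a} (obsA z) * indicator E (obsX z) \<partial>P)
      = measure P {z\<in>space P. obsA z = a \<and> obsX z \<in> E}" ..
  also have "\<dots> = (\<integral>z. pi a (obsX z) * indicator E (obsX z) \<partial>P)"
    using propens E unfolding is_propensity_def by auto
  finally show "(\<integral>z. indicator {a} (obsA z) * indicator E (obsX z) \<partial>P)
      = (\<integral>z. pi a (obsX z) * indicator E (obsX z) \<partial>P)" .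
qed

lemma AE_X_notin_of_treated:
  assumes E: "E \<in> sets borel" and treated: "AE z in P. obsA z = a \<longrightarrow> obsX z \<notin> E"
  shows "AE z in P. obsX z \<notin> E"
proof -
  have "AE z in P. indicator {a} (obsA z) * indicator E (obsX z) = (0::real)"
    using treated by eventually_elim (auto split: split_indicator)
  then have "(\<integral>z. indicator {a} (obsA z) * indicator E (obsX z) \<partial>P) = (0::real)"
    by (rule integral_eq_zero_AE)
  then have "(\<integral>z. pi a (obsX z) * indicator E (obsX z) \<partial>P) = 0"
    using integral_treated_indicator(2)[OF E] by simp
  moreover have "AE z in P. 0 \<le> pi a (obsX z) * indicator E (obsX z)"
    using pos[rule_format, of a] eps by (auto elim!: eventually_mono split: split_indicator)
  ultimately have "AE z in P. pi a (obsX z) * indicator E (obsX z) = 0"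
    using integral_nonneg_eq_0_iff_AE[OF integral_treated_indicator(1)[OF E]] by simp
  then show ?thesis
    using pos[rule_format, of a] eps
    by (auto elim!: eventually_mono[OF eventually_conj] split: split_indicator_asm)
qed

lemma integral_treated_eq_propensity:
  fixes f :: "'x \<Rightarrow> real"
  assumes f: "f \<in> borel_measurable borel"
    and int: "integrable P (\<lambda>z. indicator {a} (obsA z) * f (obsX z))"
  shows "integrable P (\<lambda>z. pi a (obsX z) * f (obsX z))"
    "(\<integral>z. indicator {a} (obsA z) * f (obsX z) \<partial>P) = (\<integral>z. pi a (obsX z) * f (obsX z) \<partial>P)"
proof -
  define w :: "real \<times> 'a \<times> 'x \<Rightarrow> real" where "w z = indicator {a} (obsA z)" for z
  have w: "w \<in> borel_measurable P" "integrable P w"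
    unfolding w_def by (auto intro!: integrable_const_bound[where B=1] split: split_indicator)
  define g where "g = cond_exp_fun P obsX borel w"
  note g_meas = borel_measurable_cond_exp_fun[OF finite_measure_axioms measurable_obs(2) w, folded g_def]
  note g_int = integrable_cond_exp_fun[OF finite_measure_axioms measurable_obs(2) w, folded g_def]
  note g_eq = integral_cond_exp_fun[OF finite_measure_axioms measurable_obs(2) w, folded g_def]
  have int_ind: "integrable P (\<lambda>z. w z * indicator E (obsX z))" if "E \<in> sets borel" for E
    using that unfolding w_def by (intro integrable_const_bound[where B=1]) (auto split: split_indicator)
  have "AE z in P. g (obsX z) = pi a (obsX z)"
  proof (rule AE_eq_of_set_integrals_eq[OF measurable_obs(2) g_meas])
    show "integrable P (\<lambda>z. g (obsX z))" using g_int[of "\<lambda>_. 1"] w by simp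
    show "integrable P (\<lambda>z. pi a (obsX z))" using integral_treated_indicator(1)[of UNIV a] by simp
    fix E :: "'x set" assume E: "E \<in> sets borel"
    show "(\<integral>z. g (obsX z) * indicator E (obsX z) \<partial>P) = (\<integral>z. pi a (obsX z) * indicator E (obsX z) \<partial>P)"
      using g_eq[of "indicator E"] E int_ind[OF E] integral_treated_indicator(2)[OF E]
      by (simp add: w_def)
  qed simp
  then have ae: "AE z in P. g (obsX z) * f (obsX z) = pi a (obsX z) * f (obsX z)"
    by eventually_elim simp
  have gf_int: "integrable P (\<lambda>z. g (obsX z) * f (obsX z))"
    using g_int[OF f] int by (simp add: w_def)
  show "integrable P (\<lambda>z. pi a (obsX z) * f (obsX z))"
    by (rule integrable_cong_AE_imp[OF gf_int _ ae]) (use f in measurable)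
  have "(\<integral>z. indicator {a} (obsA z) * f (obsX z) \<partial>P) = (\<integral>z. g (obsX z) * f (obsX z) \<partial>P)"
    using g_eq[OF f] int by (simp add: w_def)
  also have "\<dots> = (\<integral>z. pi a (obsX z) * f (obsX z) \<partial>P)"
    by (rule integral_cong_AE[OF _ _ ae]) (use f g_meas in measurable)
  finally show "(\<integral>z. indicator {a} (obsA z) * f (obsX z) \<partial>P) = (\<integral>z. pi a (obsX z) * f (obsX z) \<partial>P)" .
qed

lemma integrable_of_integrable_treated:
  fixes f :: "'x \<Rightarrow> real"
  assumes f: "f \<in> borel_measurable borel"
    and int: "integrable P (\<lambda>z. indicator {a} (obsA z) * f (obsX z))"
  shows "integrable P (\<lambda>z. f (obsX z))"
proof (rule Bochner_Integration.integrable_bound)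
  show "integrable P (\<lambda>z. (1/\<epsilon>) * (pi a (obsX z) * f (obsX z)))"
    using integral_treated_eq_propensity(1)[OF f int] by simp
  show "(\<lambda>z. f (obsX z)) \<in> borel_measurable P" using f by measurable
  show "AE z in P. norm (f (obsX z)) \<le> norm (1 / \<epsilon> * (pi a (obsX z) * f (obsX z)))"
    using pos[rule_format, of a]
  proof eventually_elim
    case (elim z)
    then have "\<epsilon> * \<bar>f (obsX z)\<bar> \<le> pi a (obsX z) * \<bar>f (obsX z)\<bar>" by (intro mult_right_mono) auto
    then show ?case using eps elim by (simp add: abs_mult field_simps)
  qed
qed

lemma regression_AE_treated_le:
  assumes sets_M: "sets M = sets P" and r1: "is_regression M m1" and r2: "is_regression M m2"
  shows "AE z in M. obsA z = a \<longrightarrow> m1 a (obsX z) \<le> m2 a (obsX z)"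
proof -
  have [measurable]: "obsX \<in> measurable M borel" "obsA \<in> measurable M (count_space UNIV)"
    using measurable_obs measurable_cong_sets[OF sets_M refl] by blast+
  have [measurable]: "m1 a \<in> borel_measurable borel" "m2 a \<in> borel_measurable borel"
    using r1 r2 unfolding is_regression_def by blast+
  define E where "E = {x. m2 a x < m1 a x}"
  have E: "E \<in> sets borel" unfolding E_def by measurable
  define d where "d z = (m1 a (obsX z) - m2 a (obsX z)) * indicator {a} (obsA z) * indicator E (obsX z)"
    for z
  have i1: "integrable M (\<lambda>z. m1 a (obsX z) * indicator {a} (obsA z) * indicator E (obsX z))"
    and e1: "(\<integral>z. obsY z * indicator {a} (obsA z) * indicator E (obsX z) \<partial>M)
      = (\<integral>z. m1 a (obsX z) * indicator {a} (obsA z) * indicator E (obsX z) \<partial>M)"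
    using r1 E unfolding is_regression_def by blast+
  have i2: "integrable M (\<lambda>z. m2 a (obsX z) * indicator {a} (obsA z) * indicator E (obsX z))"
    and e2: "(\<integral>z. obsY z * indicator {a} (obsA z) * indicator E (obsX z) \<partial>M)
      = (\<integral>z. m2 a (obsX z) * indicator {a} (obsA z) * indicator E (obsX z) \<partial>M)"
    using r2 E unfolding is_regression_def by blast+
  have d_int: "integrable M d" and "(\<integral>z. d z \<partial>M) = 0"
    unfolding d_def left_diff_distrib using i1 i2 e1 e2 by simp_all
  moreover have nn: "AE z in M. 0 \<le> d z"
    by (rule AE_I2) (auto simp: d_def E_def split: split_indicator)
  ultimately have "AE z in M. d z = 0"
    using integral_nonneg_eq_0_iff_AE[OF d_int nn] by simp
  then show ?thesis
    by eventually_elim (auto simp: d_def E_def split: split_indicator_asm)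
qed

lemma regression_AE_unique:
  assumes sets_M: "sets M = sets P" and r1: "is_regression M m1" and r2: "is_regression M m2"
    and AE_M: "\<And>Q. (AE z in M. Q z) \<Longrightarrow> (AE z in P. Q z)"
  shows "AE z in P. m1 a (obsX z) = m2 a (obsX z)"
proof -
  have [measurable]: "m1 a \<in> borel_measurable borel" "m2 a \<in> borel_measurable borel"
    using r1 r2 unfolding is_regression_def by blast+
  have "AE z in M. obsA z = a \<longrightarrow> obsX z \<notin> {x. m1 a x \<noteq> m2 a x}"
    using regression_AE_treated_le[OF sets_M r1 r2, of a] regression_AE_treated_le[OF sets_M r2 r1, of a]
    by eventually_elim auto
  then have "AE z in P. obsX z \<notin> {x. m1 a x \<noteq> m2 a x}"
    by (intro AE_X_notin_of_treated AE_M) auto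
  then show ?thesis by simp
qed

definition loss :: "real^'a \<Rightarrow> real" where
  "loss v = (norm (v - proj Cs v))\<^sup>2"

definition nearest_mu :: "'a \<Rightarrow> 'x \<Rightarrow> real" where
  "nearest_mu a x = proj Cs (vecf mu x) $ a"

definition ipw_residual :: "'a \<Rightarrow> real \<times> 'a \<times> 'x \<Rightarrow> real" where
  "ipw_residual a z = indicator {a} (obsA z) / pi a (obsX z) * (obsY z - mu (obsA z) (obsX z))"

lemma borel_measurable_loss[measurable]: "loss \<in> borel_measurable borel"
  unfolding loss_def[abs_def] using finite_Cs by measurable

lemma borel_measurable_nearest_mu[measurable]: "nearest_mu a \<in> borel_measurable borel"
proof -
  have "(\<lambda>x. proj Cs (vecf mu x)) \<in> borel_measurable borel"
    using measurable_compose[OF borel_measurable_vecf[OF borel_measurable_mu_pi(1)]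
        borel_measurable_proj[OF finite_Cs]]
    by (simp add: comp_def)
  from measurable_compose[OF this borel_measurable_nth] show ?thesis
    unfolding nearest_mu_def[abs_def] by (simp add: comp_def)
qed

lemma borel_measurable_ipw_residual[measurable]: "ipw_residual a \<in> borel_measurable P"
  unfolding ipw_residual_def[abs_def] by measurable

lemma loss_vecf_mu: "loss (vecf mu x) = (\<Sum>a\<in>UNIV. (mu a x - nearest_mu a x)\<^sup>2)"
  by (simp add: loss_def power2_norm_vec nearest_mu_def vecf_def)

lemma varphiC_eq:
  "varphiC pi mu Cs z = loss (vecf mu (obsX z))
     + (\<Sum>a\<in>UNIV. 2 * (mu a (obsX z) - nearest_mu a (obsX z)) * ipw_residual a z)"
proof -
  have square: "2 * m * i * d + m\<^sup>2 - 2 * (i * d + m) * c + c\<^sup>2 = (m - c)\<^sup>2 + 2 * (m - c) * (i * d)"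
    for m c i d :: real
    by (simp add: power2_eq_square algebra_simps)
  have "varphiC pi mu Cs z = (\<Sum>a\<in>UNIV. (mu a (obsX z) - nearest_mu a (obsX z))\<^sup>2
      + 2 * (mu a (obsX z) - nearest_mu a (obsX z)) * ipw_residual a z)"
    unfolding varphiC_def varphi1_def varphi2_def nearest_mu_def ipw_residual_def
    by (intro sum.cong refl) (rule square)
  then show ?thesis by (simp add: loss_vecf_mu sum.distrib)
qed

lemma borel_measurable_varphiC[measurable]: "varphiC pi mu Cs \<in> borel_measurable P"
  unfolding varphiC_eq[abs_def] by measurable

lemma AE_bounds:
  obtains D where "0 \<le> D" "AE z in P. \<forall>a. \<bar>mu a (obsX z)\<bar> \<le> D \<and>
    \<bar>mu a (obsX z) - nearest_mu a (obsX z)\<bar> \<le> D \<and> \<epsilon> \<le> pi a (obsX z)"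
proof -
  obtain R where R: "\<And>v. norm (proj Cs v) \<le> R" using bounded_proj[OF finite_Cs] by blast
  have nearest: "\<bar>nearest_mu a x\<bar> \<le> R" for a x
    unfolding nearest_mu_def using component_le_norm_cart R order.trans by blast
  have "AE z in P. \<forall>a. \<bar>mu a (obsX z)\<bar> \<le> \<bar>B\<bar> + \<bar>R\<bar> \<and>
    \<bar>mu a (obsX z) - nearest_mu a (obsX z)\<bar> \<le> \<bar>B\<bar> + \<bar>R\<bar> \<and> \<epsilon> \<le> pi a (obsX z)"
    using AE_bounded_positive
  proof eventually_elim
    case (elim z)
    have "\<bar>mu a (obsX z)\<bar> \<le> \<bar>B\<bar> + \<bar>R\<bar>" for a using elim[rule_format, of a] by linarith
    moreover have "\<bar>mu a (obsX z) - nearest_mu a (obsX z)\<bar> \<le> \<bar>B\<bar> + \<bar>R\<bar>" for a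
      using elim[rule_format, of a] nearest[of a "obsX z"] by linarith
    ultimately show ?case using elim by blast
  qed
  then show ?thesis by (intro that[of "\<bar>B\<bar> + \<bar>R\<bar>"]) auto
qed

lemma loss_vecf_mu_le:
  assumes "\<And>a. \<bar>mu a x - nearest_mu a x\<bar> \<le> D"
  shows "\<bar>loss (vecf mu x)\<bar> \<le> real CARD('a) * D\<^sup>2"
proof -
  have "(mu a x - nearest_mu a x)\<^sup>2 \<le> D\<^sup>2" for a
    using power_mono[OF assms abs_ge_zero, of a 2] by simp
  then have "(\<Sum>a\<in>UNIV. (mu a x - nearest_mu a x)\<^sup>2) \<le> (\<Sum>a\<in>(UNIV::'a set). D\<^sup>2)"
    by (intro sum_mono)
  then show ?thesis unfolding loss_vecf_mu by (subst abs_of_nonneg) (auto intro!: sum_nonneg)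
qed

lemma integrable_loss_mu: "integrable P (\<lambda>z. loss (vecf mu (obsX z)))"
proof -
  obtain D where "0 \<le> D" and D: "AE z in P. \<forall>a. \<bar>mu a (obsX z)\<bar> \<le> D \<and>
    \<bar>mu a (obsX z) - nearest_mu a (obsX z)\<bar> \<le> D \<and> \<epsilon> \<le> pi a (obsX z)"
    by (rule AE_bounds)
  from D have "AE z in P. \<bar>loss (vecf mu (obsX z))\<bar> \<le> real CARD('a) * D\<^sup>2"
    by eventually_elim (rule loss_vecf_mu_le; blast)
  then show ?thesis by (intro integrable_const_bound[where B="real CARD('a) * D\<^sup>2"]) auto
qed

lemma abs_ipw_residual_le:
  assumes mu: "\<bar>mu a (obsX z)\<bar> \<le> D" and pi: "\<epsilon> \<le> pi a (obsX z)"
  shows "\<bar>ipw_residual a z\<bar> \<le> (\<bar>obsY z\<bar> + D) / \<epsilon>"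
proof (cases "obsA z = a")
  case True
  then have "\<bar>ipw_residual a z\<bar> = \<bar>obsY z - mu a (obsX z)\<bar> / pi a (obsX z)"
    using pi eps by (simp add: ipw_residual_def abs_div abs_mult)
  also have "\<dots> \<le> \<bar>obsY z - mu a (obsX z)\<bar> / \<epsilon>"
    using pi eps by (intro divide_left_mono) auto
  also have "\<dots> \<le> (\<bar>obsY z\<bar> + D) / \<epsilon>"
    using mu eps by (intro divide_right_mono) auto
  finally show ?thesis .
qed (use eps mu in \<open>simp add: ipw_residual_def\<close>)

lemma abs_varphiC_le:
  obtains K0 K1 where "AE z in P. \<bar>varphiC pi mu Cs z\<bar> \<le> K0 + K1 * \<bar>obsY z\<bar>"
proof -
  obtain D where D: "0 \<le> D" "AE z in P. \<forall>a. \<bar>mu a (obsX z)\<bar> \<le> D \<and>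
    \<bar>mu a (obsX z) - nearest_mu a (obsX z)\<bar> \<le> D \<and> \<epsilon> \<le> pi a (obsX z)"
    by (rule AE_bounds)
  define N where "N = real CARD('a)"
  have "AE z in P. \<bar>varphiC pi mu Cs z\<bar> \<le> N * D\<^sup>2 + N * (2 * D * ((\<bar>obsY z\<bar> + D) / \<epsilon>))"
    using D(2)
  proof eventually_elim
    case (elim z)
    have "\<bar>\<Sum>a\<in>UNIV. 2 * (mu a (obsX z) - nearest_mu a (obsX z)) * ipw_residual a z\<bar>
        \<le> (\<Sum>a\<in>(UNIV::'a set). 2 * D * ((\<bar>obsY z\<bar> + D) / \<epsilon>))"
    proof (intro order.trans[OF sum_abs] sum_mono)
      fix a
      have "\<bar>mu a (obsX z) - nearest_mu a (obsX z)\<bar> \<le> D"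
        and "\<bar>ipw_residual a z\<bar> \<le> (\<bar>obsY z\<bar> + D) / \<epsilon>"
        using elim abs_ipw_residual_le by blast+
      then show "\<bar>2 * (mu a (obsX z) - nearest_mu a (obsX z)) * ipw_residual a z\<bar>
          \<le> 2 * D * ((\<bar>obsY z\<bar> + D) / \<epsilon>)"
        unfolding abs_mult using D(1) by (intro mult_mono) auto
    qed
    moreover have "\<bar>loss (vecf mu (obsX z))\<bar> \<le> N * D\<^sup>2"
      unfolding N_def using elim by (intro loss_vecf_mu_le) blast
    ultimately show ?case
      unfolding varphiC_eq N_def
      using abs_triangle_ineq[of "loss (vecf mu (obsX z))"
          "\<Sum>a\<in>UNIV. 2 * (mu a (obsX z) - nearest_mu a (obsX z)) * ipw_residual a z"]
      by simp
  qed
  then show ?thesis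
    by (intro that[of "N * D\<^sup>2 + N * (2 * D * D / \<epsilon>)" "N * (2 * D / \<epsilon>)"])
      (auto elim!: eventually_mono simp: algebra_simps add_divide_distrib)
qed

lemma square_integrable_varphiC: "integrable P (\<lambda>z. (varphiC pi mu Cs z)\<^sup>2)"
proof -
  obtain K0 K1 where K: "AE z in P. \<bar>varphiC pi mu Cs z\<bar> \<le> K0 + K1 * \<bar>obsY z\<bar>"
    by (rule abs_varphiC_le)
  show ?thesis
  proof (rule Bochner_Integration.integrable_bound[where f="\<lambda>z. 2 * K0\<^sup>2 + 2 * K1\<^sup>2 * (obsY z)\<^sup>2"])
    show "integrable P (\<lambda>z. 2 * K0\<^sup>2 + 2 * K1\<^sup>2 * (obsY z)\<^sup>2)" using Y_L2 by simp
    show "AE z in P. norm ((varphiC pi mu Cs z)\<^sup>2) \<le> norm (2 * K0\<^sup>2 + 2 * K1\<^sup>2 * (obsY z)\<^sup>2)"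
      using K
    proof eventually_elim
      case (elim z)
      define y where "y = K1 * \<bar>obsY z\<bar>"
      have "(varphiC pi mu Cs z)\<^sup>2 \<le> (K0 + y)\<^sup>2"
        using elim by (simp add: y_def abs_le_square_iff[symmetric] order.trans[OF _ abs_ge_self])
      also have "\<dots> \<le> (K0 + y)\<^sup>2 + (K0 - y)\<^sup>2" by simp
      also have "\<dots> = 2 * K0\<^sup>2 + 2 * K1\<^sup>2 * (obsY z)\<^sup>2"
        by (simp add: y_def power2_eq_square algebra_simps)
      finally show ?case by simp
    qed
  qed measurable
qed

lemma integrable_varphiC: "integrable P (varphiC pi mu Cs)"
  by (rule square_integrable_imp_integrable[OF borel_measurable_varphiC square_integrable_varphiC])

lemma centered_varphiC:
  defines "\<phi> \<equiv> \<lambda>z. varphiC pi mu Cs z - (\<integral>w. varphiC pi mu Cs w \<partial>P)"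
  shows "\<phi> \<in> borel_measurable P" "integrable P (\<lambda>z. (\<phi> z)\<^sup>2)" "(\<integral>z. \<phi> z \<partial>P) = 0"
proof -
  define c where "c = (\<integral>w. varphiC pi mu Cs w \<partial>P)"
  have \<phi>: "\<phi> = (\<lambda>z. varphiC pi mu Cs z - c)" unfolding \<phi>_def c_def ..
  show "\<phi> \<in> borel_measurable P" unfolding \<phi> by measurable
  have "(varphiC pi mu Cs z - c)\<^sup>2 = (varphiC pi mu Cs z)\<^sup>2 - 2 * c * varphiC pi mu Cs z + c\<^sup>2" for z
    by (simp add: power2_eq_square algebra_simps)
  then show "integrable P (\<lambda>z. (\<phi> z)\<^sup>2)"
    unfolding \<phi> using square_integrable_varphiC integrable_varphiC by simp
  show "(\<integral>z. \<phi> z \<partial>P) = 0" unfolding \<phi> using integrable_varphiC prob_space by (simp add: c_def)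
qed

end

section \<open>One-dimensional submodels\<close>

locale bounded_score = counterfactual_clustering P mu pi \<epsilon> B Cs
  for P :: "(real \<times> 'a::finite \<times> 'x::euclidean_space) measure" and mu pi \<epsilon> B Cs +
  fixes s :: "real \<times> 'a \<times> 'x \<Rightarrow> real" and Ms :: real
  assumes s_meas[measurable]: "s \<in> borel_measurable P" and s_bnd: "\<And>z. \<bar>s z\<bar> \<le> Ms"
    and Ms_ge: "1 \<le> Ms" and s_mean: "(\<integral>z. s z \<partial>P) = 0"
begin

lemma integrable_s: "integrable P s"
  by (intro integrable_const_bound[where B=Ms]) (auto simp: s_bnd)

lemma integrable_Ys: "integrable P (\<lambda>z. obsY z * s z)"
  by (rule integrable_mult_bounded_AE[OF integrable_Y s_meas, where c=Ms]) (simp add: s_bnd)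

lemma square_integrable_Ys: "integrable P (\<lambda>z. (obsY z * s z)\<^sup>2)"
proof -
  have "\<bar>(s z)\<^sup>2\<bar> \<le> Ms\<^sup>2" for z
    using power_mono[OF s_bnd[of z], of 2] by simp
  then have "integrable P (\<lambda>z. (obsY z)\<^sup>2 * (s z)\<^sup>2)"
    by (intro integrable_mult_bounded_AE[OF Y_L2, where c="Ms\<^sup>2"]) auto
  then show ?thesis by (simp add: power_mult_distrib)
qed

text \<open>Versions of E[Y s | A, X] and E[s | A, X]; the latter is clipped to [-Ms, Ms] so that the
  bound holds everywhere, not only almost everywhere.\<close>

definition cond_Ys :: "'a \<times> 'x \<Rightarrow> real" where
  "cond_Ys = cond_exp_fun P snd AX (\<lambda>z. obsY z * s z)"

definition cond_s :: "'a \<times> 'x \<Rightarrow> real" where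
  "cond_s y = max (- Ms) (min Ms (cond_exp_fun P snd AX s y))"

lemma borel_measurable_cond_Ys[measurable]: "cond_Ys \<in> borel_measurable AX"
  unfolding cond_Ys_def
  by (rule borel_measurable_cond_exp_fun[OF finite_measure_axioms _ _ integrable_Ys]) measurable

lemma integral_cond_Ys:
  assumes "f \<in> borel_measurable AX" "integrable P (\<lambda>z. obsY z * s z * f (snd z))"
  shows "integrable P (\<lambda>z. cond_Ys (snd z) * f (snd z))"
    "(\<integral>z. obsY z * s z * f (snd z) \<partial>P) = (\<integral>z. cond_Ys (snd z) * f (snd z) \<partial>P)"
  unfolding cond_Ys_def
  using integrable_cond_exp_fun[OF finite_measure_axioms _ _ integrable_Ys, of snd AX f]
    integral_cond_exp_fun[OF finite_measure_axioms _ _ integrable_Ys, of snd AX f] assms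
  by (auto simp: mult.assoc)

lemma integrable_cond_Ys: "integrable P (\<lambda>z. cond_Ys (snd z))"
  using integral_cond_Ys(1)[of "\<lambda>_. 1"] integrable_Ys by simp

lemma square_integrable_cond_Ys: "integrable P (\<lambda>z. (cond_Ys (a, obsX z))\<^sup>2)"
proof (rule integrable_of_integrable_treated[of "\<lambda>x. (cond_Ys (a, x))\<^sup>2" a])
  have "integrable P (\<lambda>z. (cond_Ys (snd z))\<^sup>2)"
    unfolding cond_Ys_def
    by (rule square_integrable_cond_exp_fun[OF finite_measure_axioms _ _ integrable_Ys
          square_integrable_Ys]) measurable
  then have "integrable P (\<lambda>z. (cond_Ys (snd z))\<^sup>2 * indicator {a} (obsA z))"
    by (rule integrable_mult_bounded_AE[where c=1]) (auto split: split_indicator)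
  then show "integrable P (\<lambda>z. indicator {a} (obsA z) * (cond_Ys (a, obsX z))\<^sup>2)"
    by (rule integrable_cong_AE_imp) (auto simp: snd_obs split: split_indicator)
qed measurable

lemma borel_measurable_cond_s[measurable]: "cond_s \<in> borel_measurable AX"
proof -
  have [measurable]: "cond_exp_fun P snd AX s \<in> borel_measurable AX"
    by (rule borel_measurable_cond_exp_fun[OF finite_measure_axioms _ s_meas integrable_s]) measurable
  show ?thesis unfolding cond_s_def[abs_def] by measurable
qed

lemma abs_cond_s_le: "\<bar>cond_s y\<bar> \<le> Ms"
  using Ms_ge unfolding cond_s_def by auto

lemma integral_cond_s:
  assumes f: "f \<in> borel_measurable AX" and int: "integrable P (\<lambda>z. s z * f (snd z))"
  shows "integrable P (\<lambda>z. cond_s (snd z) * f (snd z))"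
    "(\<integral>z. s z * f (snd z) \<partial>P) = (\<integral>z. cond_s (snd z) * f (snd z) \<partial>P)"
proof -
  let ?g = "cond_exp_fun P snd AX s"
  note g_props = borel_measurable_cond_exp_fun integrable_cond_exp_fun integral_cond_exp_fun
  note g_props = g_props[OF finite_measure_axioms measurable_obs(4) s_meas integrable_s]
  have "AE z in P. \<bar>?g (snd z)\<bar> \<le> Ms"
    by (rule AE_abs_cond_exp_fun_le[OF finite_measure_axioms measurable_obs(4) s_meas integrable_s])
      (simp add: s_bnd)
  then have ae: "AE z in P. ?g (snd z) * f (snd z) = cond_s (snd z) * f (snd z)"
    by eventually_elim (auto simp: cond_s_def)
  show "integrable P (\<lambda>z. cond_s (snd z) * f (snd z))"
    by (rule integrable_cong_AE_imp[OF g_props(2)[OF f int] _ ae]) (use f in measurable)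
  show "(\<integral>z. s z * f (snd z) \<partial>P) = (\<integral>z. cond_s (snd z) * f (snd z) \<partial>P)"
    using g_props(3)[OF f int] integral_cong_AE[OF _ _ ae] f g_props(1) by simp
qed

definition P_sub :: "real \<Rightarrow> (real \<times> 'a \<times> 'x) measure" where
  "P_sub t = density P (\<lambda>z. ennreal (1 + t * s z))"

text \<open>Bayes' rule for the density 1 + t s.\<close>

definition mu_sub :: "real \<Rightarrow> 'a \<Rightarrow> 'x \<Rightarrow> real" where
  "mu_sub t a x = (mu a x + t * cond_Ys (a, x)) / (1 + t * cond_s (a, x))"

definition t_max :: real where
  "t_max = 1 / (2 * Ms)"

lemma t_max_pos: "0 < t_max"
  using Ms_ge by (simp add: t_max_def)

lemma t_max_le_half: "t_max \<le> 1/2"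
  using Ms_ge by (simp add: t_max_def field_simps)

lemma abs_mult_le_half: "\<bar>t\<bar> \<le> t_max \<Longrightarrow> \<bar>c\<bar> \<le> Ms \<Longrightarrow> \<bar>t * c\<bar> \<le> 1/2"
  using mult_mono[of "\<bar>t\<bar>" t_max "\<bar>c\<bar>" Ms] Ms_ge by (simp add: abs_mult t_max_def)

lemma half_le_cond_denom: "\<bar>t\<bar> \<le> t_max \<Longrightarrow> 1/2 \<le> 1 + t * cond_s y"
  using abs_mult_le_half[OF _ abs_cond_s_le, of t y] by (auto simp: abs_le_iff)

lemma half_le_density: "\<bar>t\<bar> \<le> t_max \<Longrightarrow> 1/2 \<le> 1 + t * s z"
  using abs_mult_le_half[OF _ s_bnd, of t z] by (auto simp: abs_le_iff)

lemma borel_measurable_mu_sub[measurable]: "mu_sub t a \<in> borel_measurable borel"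
  unfolding mu_sub_def[abs_def] by measurable

lemma borel_measurable_mu_sub_AX[measurable]: "(\<lambda>y. mu_sub t (fst y) (snd y)) \<in> borel_measurable AX"
  by (rule borel_measurable_AX_split) simp

lemma mu_sub_mult: "\<bar>t\<bar> \<le> t_max \<Longrightarrow> (1 + t * cond_s (a, x)) * mu_sub t a x = mu a x + t * cond_Ys (a, x)"
  using half_le_cond_denom[of t "(a, x)"] by (simp add: mu_sub_def)

lemma integrable_mu_sub:
  assumes t: "\<bar>t\<bar> \<le> t_max"
  shows "integrable P (\<lambda>z. mu_sub t (obsA z) (obsX z))"
proof (rule Bochner_Integration.integrable_bound[where f="\<lambda>z. 2 * (\<bar>B\<bar> + \<bar>t\<bar> * \<bar>cond_Ys (snd z)\<bar>)"])
  show "integrable P (\<lambda>z. 2 * (\<bar>B\<bar> + \<bar>t\<bar> * \<bar>cond_Ys (snd z)\<bar>))"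
    using integrable_cond_Ys by simp
  show "(\<lambda>z. mu_sub t (obsA z) (obsX z)) \<in> borel_measurable P"
    using measurable_compose[OF measurable_obs(4) borel_measurable_mu_sub_AX] by (simp add: snd_obs)
  show "AE z in P. norm (mu_sub t (obsA z) (obsX z)) \<le> norm (2 * (\<bar>B\<bar> + \<bar>t\<bar> * \<bar>cond_Ys (snd z)\<bar>))"
    using mu_bounded
  proof eventually_elim
    case (elim z)
    let ?a = "obsA z" and ?x = "obsX z"
    have d: "1/2 \<le> 1 + t * cond_s (?a, ?x)" by (rule half_le_cond_denom[OF t])
    have "\<bar>mu_sub t ?a ?x\<bar> = \<bar>mu ?a ?x + t * cond_Ys (?a, ?x)\<bar> / (1 + t * cond_s (?a, ?x))"
      using d by (simp add: mu_sub_def abs_div)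
    also have "\<dots> \<le> \<bar>mu ?a ?x + t * cond_Ys (?a, ?x)\<bar> / (1/2)"
      using d by (intro divide_left_mono) auto
    also have "\<dots> \<le> 2 * (\<bar>B\<bar> + \<bar>t\<bar> * \<bar>cond_Ys (snd z)\<bar>)"
      using elim[rule_format, of ?a] abs_triangle_ineq[of "mu ?a ?x" "t * cond_Ys (?a, ?x)"]
      by (simp add: abs_mult snd_obs)
    finally show ?case by simp
  qed
qed

lemma P_sub_integral:
  assumes t: "\<bar>t\<bar> \<le> t_max" and f[measurable]: "f \<in> borel_measurable P"
  shows "integrable (P_sub t) f \<longleftrightarrow> integrable P (\<lambda>z. (1 + t * s z) * f z)"
    "(\<integral>z. f z \<partial>P_sub t) = (\<integral>z. (1 + t * s z) * f z \<partial>P)"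
proof -
  have "0 \<le> 1 + t * s z" for z using half_le_density[OF t, of z] by linarith
  then have "AE z in P. 0 \<le> 1 + t * s z" by simp
  then show "integrable (P_sub t) f \<longleftrightarrow> integrable P (\<lambda>z. (1 + t * s z) * f z)"
    "(\<integral>z. f z \<partial>P_sub t) = (\<integral>z. (1 + t * s z) * f z \<partial>P)"
    unfolding P_sub_def by (simp_all add: integrable_density integral_density)
qed

lemma AE_P_sub_iff:
  assumes t: "\<bar>t\<bar> \<le> t_max"
  shows "(AE z in P_sub t. Q z) \<longleftrightarrow> (AE z in P. Q z)"
proof -
  have "0 < 1 + t * s z" for z using half_le_density[OF t, of z] by linarith
  then show ?thesis unfolding P_sub_def by (subst AE_density) auto
qed

lemma sets_P_sub: "sets (P_sub t) = sets P"
  unfolding P_sub_def by simp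

context
  fixes t :: real and a :: 'a and S :: "'x set"
  assumes t: "\<bar>t\<bar> \<le> t_max" and S[measurable]: "S \<in> sets borel"
begin

definition cell :: "'a \<times> 'x \<Rightarrow> real" where
  "cell y = indicator {a} (fst y) * indicator S (snd y)"

lemma borel_measurable_cell[measurable]: "cell \<in> borel_measurable AX"
  unfolding cell_def[abs_def] by measurable

lemma abs_cell_le: "\<bar>cell y\<bar> \<le> 1"
  by (auto simp: cell_def split: split_indicator)

lemma cell_snd: "cell (snd z) = indicator {a} (obsA z) * indicator S (obsX z)"
  by (simp add: cell_def snd_obs)

lemma regression_cell:
  "integrable P (\<lambda>z. mu a (obsX z) * cell (snd z))"
  "(\<integral>z. obsY z * cell (snd z) \<partial>P) = (\<integral>z. mu a (obsX z) * cell (snd z) \<partial>P)"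
  using regr S unfolding is_regression_def by (simp_all add: cell_snd mult.assoc)

lemma cond_Ys_cell: "cond_Ys (snd z) * cell (snd z) = cond_Ys (a, obsX z) * cell (snd z)"
  by (simp add: cell_def snd_obs split: split_indicator)

lemma integral_Y_cell_P_sub:
  "integrable (P_sub t) (\<lambda>z. obsY z * cell (snd z))"
  "(\<integral>z. obsY z * cell (snd z) \<partial>P_sub t)
     = (\<integral>z. (mu a (obsX z) + t * cond_Ys (a, obsX z)) * cell (snd z) \<partial>P)"
proof -
  have Yr: "integrable P (\<lambda>z. obsY z * cell (snd z))"
    by (rule integrable_mult_bounded_AE[OF integrable_Y, where c=1]) (auto simp: abs_cell_le)
  have Ysr: "integrable P (\<lambda>z. obsY z * s z * cell (snd z))"
    by (rule integrable_mult_bounded_AE[OF integrable_Ys, where c=1]) (auto simp: abs_cell_le)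
  note Hr = integral_cond_Ys[OF borel_measurable_cell Ysr, unfolded cond_Ys_cell]
  have expand: "(1 + t * s z) * (obsY z * cell (snd z)) = obsY z * cell (snd z) + t * (obsY z * s z * cell (snd z))"
    for z by (simp add: algebra_simps)
  show "integrable (P_sub t) (\<lambda>z. obsY z * cell (snd z))"
    using Yr Ysr by (simp add: P_sub_integral(1)[OF t] expand)
  have "(\<integral>z. obsY z * cell (snd z) \<partial>P_sub t)
      = (\<integral>z. obsY z * cell (snd z) \<partial>P) + t * (\<integral>z. obsY z * s z * cell (snd z) \<partial>P)"
    using Yr Ysr by (simp add: P_sub_integral(2)[OF t] expand)
  also have "\<dots> = (\<integral>z. mu a (obsX z) * cell (snd z) \<partial>P) + t * (\<integral>z. cond_Ys (a, obsX z) * cell (snd z) \<partial>P)"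
    using regression_cell Hr by simp
  also have "\<dots> = (\<integral>z. (mu a (obsX z) + t * cond_Ys (a, obsX z)) * cell (snd z) \<partial>P)"
    using regression_cell Hr by (simp add: distrib_right mult.assoc)
  finally show "(\<integral>z. obsY z * cell (snd z) \<partial>P_sub t)
     = (\<integral>z. (mu a (obsX z) + t * cond_Ys (a, obsX z)) * cell (snd z) \<partial>P)" .
qed

lemma integral_mu_sub_cell_P_sub:
  "integrable (P_sub t) (\<lambda>z. mu_sub t a (obsX z) * cell (snd z))"
  "(\<integral>z. mu_sub t a (obsX z) * cell (snd z) \<partial>P_sub t)
     = (\<integral>z. (mu a (obsX z) + t * cond_Ys (a, obsX z)) * cell (snd z) \<partial>P)"
proof -
  define \<phi> where "\<phi> y = mu_sub t (fst y) (snd y) * cell y" for y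
  have [measurable]: "\<phi> \<in> borel_measurable AX" unfolding \<phi>_def[abs_def] by measurable
  have \<phi>_snd: "mu_sub t a (obsX z) * cell (snd z) = \<phi> (snd z)" for z
    by (cases "obsA z = a") (simp_all add: \<phi>_def cell_def snd_obs)
  have \<phi>_int: "integrable P (\<lambda>z. \<phi> (snd z))"
    using integrable_mult_bounded_AE[OF integrable_mu_sub[OF t], where c=1 and g="\<lambda>z. cell (snd z)"]
    by (simp add: \<phi>_def abs_cell_le snd_obs)
  have s\<phi>_int: "integrable P (\<lambda>z. s z * \<phi> (snd z))"
    using integrable_mult_bounded_AE[OF \<phi>_int s_meas, where c=Ms] by (simp add: s_bnd mult.commute)
  note G\<phi> = integral_cond_s[OF _ s\<phi>_int]
  have expand: "(1 + t * s z) * \<phi> (snd z) = \<phi> (snd z) + t * (s z * \<phi> (snd z))" for z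
    by (simp add: algebra_simps)
  show "integrable (P_sub t) (\<lambda>z. mu_sub t a (obsX z) * cell (snd z))"
    unfolding \<phi>_snd using \<phi>_int s\<phi>_int by (simp add: P_sub_integral(1)[OF t] expand)
  have "(\<integral>z. \<phi> (snd z) \<partial>P_sub t) = (\<integral>z. \<phi> (snd z) \<partial>P) + t * (\<integral>z. s z * \<phi> (snd z) \<partial>P)"
    using \<phi>_int s\<phi>_int by (simp add: P_sub_integral(2)[OF t] expand)
  also have "\<dots> = (\<integral>z. (1 + t * cond_s (snd z)) * \<phi> (snd z) \<partial>P)"
    using \<phi>_int G\<phi> by (simp add: algebra_simps)
  also have "\<dots> = (\<integral>z. (mu a (obsX z) + t * cond_Ys (a, obsX z)) * cell (snd z) \<partial>P)"
    by (intro Bochner_Integration.integral_cong refl)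
      (simp add: \<phi>_def cell_def snd_obs mu_sub_mult[OF t] split: split_indicator)
  finally show "(\<integral>z. mu_sub t a (obsX z) * cell (snd z) \<partial>P_sub t)
     = (\<integral>z. (mu a (obsX z) + t * cond_Ys (a, obsX z)) * cell (snd z) \<partial>P)"
    unfolding \<phi>_snd .
qed

end

lemma is_regression_P_sub: "\<bar>t\<bar> \<le> t_max \<Longrightarrow> is_regression (P_sub t) (mu_sub t)"
  unfolding is_regression_def
  using integral_Y_cell_P_sub integral_mu_sub_cell_P_sub by (simp add: cell_snd mult.assoc)

definition risk_sub :: "real \<Rightarrow> real" where
  "risk_sub t = (\<integral>z. (1 + t * s z) * loss (vecf (mu_sub t) (obsX z)) \<partial>P)"

lemma psi_P_sub:
  assumes t: "\<bar>t\<bar> \<le> t_max"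
  shows "psi (P_sub t) Cs = risk_sub t"
proof -
  define m where "m = (SOME m. is_regression (P_sub t) m)"
  have m: "is_regression (P_sub t) m"
    unfolding m_def by (rule someI[of _ "mu_sub t"]) (rule is_regression_P_sub[OF t])
  have [measurable]: "m a \<in> borel_measurable borel" for a
    using m unfolding is_regression_def by blast
  have [measurable]: "obsX \<in> measurable (P_sub t) borel"
    using measurable_obs(2) measurable_cong_sets[OF sets_P_sub refl] by blast
  have "AE z in P. m a (obsX z) = mu_sub t a (obsX z)" for a
    by (rule regression_AE_unique[OF sets_P_sub m is_regression_P_sub[OF t]]) (simp add: AE_P_sub_iff[OF t])
  then have "AE z in P. \<forall>a. m a (obsX z) = mu_sub t a (obsX z)" by (simp add: AE_all_countable)
  then have ae: "AE z in P_sub t. loss (vecf m (obsX z)) = loss (vecf (mu_sub t) (obsX z))"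
    unfolding AE_P_sub_iff[OF t] by eventually_elim (simp add: vecf_def)
  have "psi (P_sub t) Cs = (\<integral>z. loss (vecf m (obsX z)) \<partial>P_sub t)"
    unfolding psi_def risk_def m_def loss_def ..
  also have "\<dots> = (\<integral>z. loss (vecf (mu_sub t) (obsX z)) \<partial>P_sub t)"
    by (rule integral_cong_AE) (use ae in measurable)
  also have "\<dots> = risk_sub t"
    unfolding risk_sub_def by (rule P_sub_integral(2)[OF t]) measurable
  finally show ?thesis .
qed

section \<open>Differentiability of the risk along the submodel\<close>

definition mu_sub_deriv :: "'a \<Rightarrow> 'x \<Rightarrow> real" where
  "mu_sub_deriv a x = cond_Ys (a, x) - mu a x * cond_s (a, x)"

definition deriv_sq :: "'x \<Rightarrow> real" where
  "deriv_sq x = (\<Sum>a\<in>UNIV. (mu_sub_deriv a x)\<^sup>2)"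

lemma mu_sub_0: "mu_sub 0 = mu"
  by (simp add: mu_sub_def[abs_def])

lemma mu_sub_has_derivative: "((\<lambda>t. mu_sub t a x) has_field_derivative mu_sub_deriv a x) (at 0)"
  unfolding mu_sub_def[abs_def] mu_sub_deriv_def
  by (auto intro!: derivative_eq_intros simp: power2_eq_square)

lemma tendsto_vecf_mu_sub: "((\<lambda>t. vecf (mu_sub t) x) \<longlongrightarrow> vecf mu x) (nhds 0)"
proof -
  have "((\<lambda>t. (mu a x + t * cond_Ys (a, x)) / (1 + t * cond_s (a, x)))
      \<longlongrightarrow> (mu a x + 0 * cond_Ys (a, x)) / (1 + 0 * cond_s (a, x))) (nhds 0)" for a
    by (intro tendsto_intros filterlim_ident) simp
  then show ?thesis
    unfolding vecf_def mu_sub_def[abs_def] by (intro tendsto_vec_lambda) simp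
qed

lemma abs_mu_sub_diff_le:
  assumes t: "\<bar>t\<bar> \<le> t_max"
  shows "\<bar>mu_sub t a x - mu a x\<bar> \<le> 2 * \<bar>t\<bar> * \<bar>mu_sub_deriv a x\<bar>"
proof -
  have d: "1/2 \<le> 1 + t * cond_s (a, x)" by (rule half_le_cond_denom[OF t])
  have "(1 + t * cond_s (a, x)) * (mu_sub t a x - mu a x) = t * mu_sub_deriv a x"
    using mu_sub_mult[OF t, of a x] by (simp add: mu_sub_deriv_def algebra_simps)
  then have "\<bar>(1 + t * cond_s (a, x)) * (mu_sub t a x - mu a x)\<bar> = \<bar>t * mu_sub_deriv a x\<bar>"
    by simp
  then have "(1 + t * cond_s (a, x)) * \<bar>mu_sub t a x - mu a x\<bar> = \<bar>t * mu_sub_deriv a x\<bar>"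
    using d by (simp add: abs_mult)
  moreover have "(1/2) * \<bar>mu_sub t a x - mu a x\<bar> \<le> (1 + t * cond_s (a, x)) * \<bar>mu_sub t a x - mu a x\<bar>"
    using d by (intro mult_right_mono) auto
  ultimately show ?thesis by (simp add: abs_mult)
qed

lemma norm_vecf_mu_sub_diff_le:
  assumes t: "\<bar>t\<bar> \<le> t_max"
  shows "norm (vecf (mu_sub t) x - vecf mu x) \<le> 2 * \<bar>t\<bar> * sqrt (deriv_sq x)"
proof (rule power2_le_imp_le)
  have "(norm (vecf (mu_sub t) x - vecf mu x))\<^sup>2 = (\<Sum>a\<in>UNIV. (mu_sub t a x - mu a x)\<^sup>2)"
    by (simp add: power2_norm_vec vecf_def)
  also have "\<dots> \<le> (\<Sum>a\<in>UNIV. (2 * \<bar>t\<bar> * \<bar>mu_sub_deriv a x\<bar>)\<^sup>2)"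
    using power_mono[OF abs_mu_sub_diff_le[OF t] abs_ge_zero, where n=2] by (intro sum_mono) simp
  also have "\<dots> = (2 * \<bar>t\<bar> * sqrt (deriv_sq x))\<^sup>2"
    by (simp add: deriv_sq_def sum_distrib_left power_mult_distrib sum_nonneg)
  finally show "(norm (vecf (mu_sub t) x - vecf mu x))\<^sup>2 \<le> (2 * \<bar>t\<bar> * sqrt (deriv_sq x))\<^sup>2" .
qed (simp add: deriv_sq_def sum_nonneg)

end

lemma abs_power2_diff_le:
  fixes u v e :: real
  assumes "\<bar>u - v\<bar> \<le> e" "0 \<le> u" "0 \<le> v"
  shows "\<bar>u\<^sup>2 - v\<^sup>2\<bar> \<le> e * (2 * v + e)"
proof -
  have "u\<^sup>2 - v\<^sup>2 = (u - v) * (u + v)"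
    by (simp add: power2_eq_square algebra_simps)
  then have "\<bar>u\<^sup>2 - v\<^sup>2\<bar> = \<bar>u - v\<bar> * (u + v)"
    using assms by (simp add: abs_mult)
  also have "\<dots> \<le> e * (2 * v + e)"
    using assms by (intro mult_mono) auto
  finally show ?thesis .
qed

context bounded_score
begin

definition risk_quot :: "real \<Rightarrow> real \<times> 'a \<times> 'x \<Rightarrow> real" where
  "risk_quot t z = ((1 + t * s z) * loss (vecf (mu_sub t) (obsX z)) - loss (vecf mu (obsX z))) / t"

definition risk_deriv_integrand :: "real \<times> 'a \<times> 'x \<Rightarrow> real" where
  "risk_deriv_integrand z = loss (vecf mu (obsX z)) * s z
     + (\<Sum>a\<in>UNIV. 2 * (mu a (obsX z) - nearest_mu a (obsX z)) * mu_sub_deriv a (obsX z))"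

definition risk_quot_bound :: "real \<times> 'a \<times> 'x \<Rightarrow> real" where
  "risk_quot_bound z = 6 * deriv_sq (obsX z) + (3 + Ms) * loss (vecf mu (obsX z))"

text \<open>Where mu(x) has a unique nearest codeword c, the loss near mu(x) is the smooth
  function v \<mapsto> ||v - c||^2.\<close>

lemma risk_quot_tendsto:
  assumes unique: "unique_nearest Cs (vecf mu (obsX z))"
  shows "((\<lambda>t. risk_quot t z) \<longlongrightarrow> risk_deriv_integrand z) (at 0)"
proof -
  let ?x = "obsX z"
  define c where "c = proj Cs (vecf mu ?x)"
  have "eventually (\<lambda>t. proj Cs (vecf (mu_sub t) ?x) = c) (nhds 0)"
    unfolding c_def
    by (rule eventually_compose_filterlim[OF eventually_proj_eq[OF finite_Cs unique] tendsto_vecf_mu_sub])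
  then have "eventually (\<lambda>t. (1 + t * s z) * loss (vecf (mu_sub t) ?x)
      = (1 + t * s z) * (\<Sum>a\<in>UNIV. (mu_sub t a ?x - c $ a)\<^sup>2)) (nhds 0)"
    by eventually_elim (simp add: loss_def power2_norm_vec vecf_def)
  moreover have "((\<lambda>t. (1 + t * s z) * (\<Sum>a\<in>UNIV. (mu_sub t a ?x - c $ a)\<^sup>2))
      has_field_derivative s z * (\<Sum>a\<in>UNIV. (mu_sub 0 a ?x - c $ a)\<^sup>2)
        + (1 + 0 * s z) * (\<Sum>a\<in>UNIV. 2 * (mu_sub 0 a ?x - c $ a) * mu_sub_deriv a ?x)) (at 0)"
    by (auto intro!: derivative_eq_intros mu_sub_has_derivative simp: power2_eq_square algebra_simps)
  ultimately have "((\<lambda>t. (1 + t * s z) * loss (vecf (mu_sub t) ?x))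
      has_field_derivative risk_deriv_integrand z) (at 0)"
    by (subst DERIV_cong_ev[OF refl _ refl])
      (simp_all add: risk_deriv_integrand_def mu_sub_0 loss_vecf_mu nearest_mu_def c_def mult.commute)
  then show ?thesis
    by (simp add: has_field_derivative_iff risk_quot_def mu_sub_0)
qed

lemma abs_risk_quot_le:
  assumes t: "\<bar>t\<bar> \<le> t_max" "t \<noteq> 0"
  shows "\<bar>risk_quot t z\<bar> \<le> risk_quot_bound z"
proof -
  define u where "u = vecf (mu_sub t) (obsX z)"
  define v where "v = vecf mu (obsX z)"
  define r where "r = sqrt (deriv_sq (obsX z))"
  define dv where "dv = norm (v - proj Cs v)"
  define e where "e = norm (u - v)"
  have r: "r\<^sup>2 = deriv_sq (obsX z)" "0 \<le> r"
    by (simp_all add: r_def deriv_sq_def sum_nonneg)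
  have e1: "e \<le> 2 * \<bar>t\<bar> * r"
    using norm_vecf_mu_sub_diff_le[OF t(1)] by (simp add: e_def u_def v_def r_def)
  moreover have "2 * \<bar>t\<bar> * r \<le> r"
    using mult_right_mono[of "2 * \<bar>t\<bar>" 1 r] t(1) t_max_le_half r(2) by simp
  ultimately have e: "e \<le> 2 * \<bar>t\<bar> * r" "e \<le> r" by simp_all
  have "\<bar>loss u - loss v\<bar> \<le> e * (2 * dv + e)"
    unfolding loss_def dv_def e_def
    by (rule abs_power2_diff_le[OF abs_norm_proj_diff_le[OF finite_Cs]]) auto
  also have "\<dots> \<le> (2 * \<bar>t\<bar> * r) * (2 * dv + r)"
    using e r(2) by (intro mult_mono) (auto simp: dv_def e_def)
  finally have loss_diff: "\<bar>loss u - loss v\<bar> \<le> 2 * \<bar>t\<bar> * r * (2 * dv + r)" .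
  have ts: "\<bar>t * s z\<bar> \<le> 1/2" by (rule abs_mult_le_half[OF t(1) s_bnd])
  have "\<bar>1 + t * s z\<bar> \<le> 3/2" using ts by (simp add: abs_le_iff)
  then have "\<bar>(1 + t * s z) * (loss u - loss v)\<bar> \<le> (3/2) * \<bar>loss u - loss v\<bar>"
    unfolding abs_mult by (rule mult_right_mono) simp
  moreover have "\<bar>t * s z * loss v\<bar> \<le> \<bar>t\<bar> * Ms * loss v"
    unfolding abs_mult using s_bnd[of z] by (auto simp: loss_def intro!: mult_left_mono mult_right_mono)
  moreover have "(1 + t * s z) * loss u - loss v = (1 + t * s z) * (loss u - loss v) + t * s z * loss v"
    by (simp add: algebra_simps)
  ultimately have "\<bar>(1 + t * s z) * loss u - loss v\<bar> \<le> (3/2) * \<bar>loss u - loss v\<bar> + \<bar>t\<bar> * Ms * loss v"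
    by (smt (verit) abs_triangle_ineq)
  also have "\<dots> \<le> \<bar>t\<bar> * (6 * r * dv + 3 * r\<^sup>2 + Ms * loss v)"
    using loss_diff by (simp add: algebra_simps power2_eq_square)
  also have "\<dots> \<le> \<bar>t\<bar> * risk_quot_bound z"
    using sum_squares_bound[of r dv] r
    by (intro mult_left_mono) (auto simp: risk_quot_bound_def loss_def dv_def v_def algebra_simps)
  finally show ?thesis
    using t(2) by (simp add: risk_quot_def abs_divide divide_le_eq u_def v_def mult.commute)
qed

lemma borel_measurable_mu_sub_deriv[measurable]: "mu_sub_deriv a \<in> borel_measurable borel"
  unfolding mu_sub_deriv_def[abs_def] by measurable

lemma square_integrable_mu_sub_deriv: "integrable P (\<lambda>z. (mu_sub_deriv a (obsX z))\<^sup>2)"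
proof (rule Bochner_Integration.integrable_bound)
  show "integrable P (\<lambda>z. 2 * (cond_Ys (a, obsX z))\<^sup>2 + 2 * (B * Ms)\<^sup>2)"
    using square_integrable_cond_Ys[of a] by simp
  show "AE z in P. norm ((mu_sub_deriv a (obsX z))\<^sup>2) \<le> norm (2 * (cond_Ys (a, obsX z))\<^sup>2 + 2 * (B * Ms)\<^sup>2)"
    using mu_bounded
  proof eventually_elim
    case (elim z)
    define h where "h = cond_Ys (a, obsX z)"
    define g where "g = mu a (obsX z) * cond_s (a, obsX z)"
    have "\<bar>g\<bar> \<le> \<bar>B * Ms\<bar>"
      unfolding g_def abs_mult using elim[rule_format, of a] abs_cond_s_le[of "(a, obsX z)"]
      by (intro mult_mono) auto
    then have "g\<^sup>2 \<le> (B * Ms)\<^sup>2" by (simp add: abs_le_square_iff)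
    moreover have "(h - g)\<^sup>2 \<le> 2 * h\<^sup>2 + 2 * g\<^sup>2"
      using zero_le_power2[of "h + g"] by (simp add: power2_eq_square algebra_simps)
    ultimately show ?case by (simp add: mu_sub_deriv_def h_def g_def)
  qed
qed measurable

lemma integrable_risk_quot_bound: "integrable P risk_quot_bound"
proof -
  have "integrable P (\<lambda>z. deriv_sq (obsX z))"
    unfolding deriv_sq_def using square_integrable_mu_sub_deriv by simp
  then show ?thesis
    unfolding risk_quot_bound_def[abs_def] using integrable_loss_mu by simp
qed

lemma borel_measurable_risk_quot[measurable]: "risk_quot t \<in> borel_measurable P"
  unfolding risk_quot_def[abs_def] by measurable

lemma integrable_risk_quot:
  assumes "\<bar>t\<bar> \<le> t_max" "t \<noteq> 0"
  shows "integrable P (risk_quot t)"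
proof (rule Bochner_Integration.integrable_bound[OF integrable_risk_quot_bound])
  show "AE z in P. norm (risk_quot t z) \<le> norm (risk_quot_bound z)"
    using abs_risk_quot_le[OF assms] by (auto intro!: AE_I2 order.trans[OF _ abs_ge_self])
qed simp

lemma borel_measurable_risk_deriv_integrand[measurable]: "risk_deriv_integrand \<in> borel_measurable P"
  unfolding risk_deriv_integrand_def[abs_def] by measurable

lemma AE_unique_nearest: "AE z in P. unique_nearest Cs (vecf mu (obsX z))"
  using no_ties by eventually_elim (rule unique_nearest_if_notin_margin_nbhd[OF finite_Cs])

lemma risk_sub_diff_quot:
  assumes t: "\<bar>t\<bar> \<le> t_max" "t \<noteq> 0"
  shows "(risk_sub t - risk_sub 0) / t = (\<integral>z. risk_quot t z \<partial>P)"
proof -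
  have "risk_sub t = (\<integral>z. loss (vecf mu (obsX z)) + t * risk_quot t z \<partial>P)"
    unfolding risk_sub_def using t(2) by (simp add: risk_quot_def)
  also have "\<dots> = risk_sub 0 + t * (\<integral>z. risk_quot t z \<partial>P)"
    using integrable_loss_mu integrable_risk_quot[OF t] by (simp add: risk_sub_def mu_sub_0)
  finally show ?thesis using t(2) by simp
qed

text \<open>Dominated convergence, with the margin condition supplying pointwise convergence.\<close>

lemma risk_sub_has_derivative: "(risk_sub has_field_derivative (\<integral>z. risk_deriv_integrand z \<partial>P)) (at 0)"
proof -
  have "((\<lambda>t. (risk_sub t - risk_sub 0) / (t - 0)) \<longlongrightarrow> (\<integral>z. risk_deriv_integrand z \<partial>P))
      (at 0 within {-t_max<..<t_max})"
  proof (subst tendsto_at_iff_sequentially, intro allI impI)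
    fix X :: "nat \<Rightarrow> real"
    assume X: "\<forall>i. X i \<in> {-t_max<..<t_max} - {0}" and lim: "X \<longlonglongrightarrow> 0"
    have Xi: "\<bar>X i\<bar> \<le> t_max" "X i \<noteq> 0" for i using X[rule_format, of i] by auto
    have X_at: "filterlim X (at 0) sequentially"
      by (rule filterlim_atI[OF lim]) (use Xi in simp)
    have "(\<lambda>i. \<integral>z. risk_quot (X i) z \<partial>P) \<longlonglongrightarrow> (\<integral>z. risk_deriv_integrand z \<partial>P)"
    proof (rule integral_dominated_convergence[where w=risk_quot_bound])
      show "AE z in P. norm (risk_quot (X i) z) \<le> risk_quot_bound z" for i
        using abs_risk_quot_le[OF Xi] by simp
      show "AE z in P. (\<lambda>i. risk_quot (X i) z) \<longlonglongrightarrow> risk_deriv_integrand z"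
        using AE_unique_nearest
        by eventually_elim (rule filterlim_compose[OF risk_quot_tendsto X_at])
    qed (simp_all add: integrable_risk_quot_bound)
    then show "((\<lambda>t. (risk_sub t - risk_sub 0) / (t - 0)) \<circ> X) \<longlonglongrightarrow> (\<integral>z. risk_deriv_integrand z \<partial>P)"
      using risk_sub_diff_quot[OF Xi] by (simp add: comp_def)
  qed
  then show ?thesis
    using at_within_open[of 0 "{-t_max<..<t_max}"] t_max_pos by (simp add: has_field_derivative_iff)
qed

lemma psi_has_derivative:
  "((\<lambda>t. psi (density P (\<lambda>z. ennreal (1 + t * s z))) Cs) has_field_derivative
     (\<integral>z. risk_deriv_integrand z \<partial>P)) (at 0)"
proof -
  have "eventually (\<lambda>t. t \<in> {-t_max<..<t_max}) (nhds 0)"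
    using t_max_pos by (intro eventually_nhds_in_open) auto
  then have "eventually (\<lambda>t. psi (density P (\<lambda>z. ennreal (1 + t * s z))) Cs = risk_sub t) (nhds 0)"
    by eventually_elim (use psi_P_sub in \<open>auto simp: P_sub_def\<close>)
  then show ?thesis
    using risk_sub_has_derivative by (simp add: DERIV_cong_ev[OF refl _ refl])
qed

section \<open>Identification of the derivative\<close>

text \<open>The tower property over (A, X) turns the inverse-propensity-weighted residual into the
  derivative of the submodel regression.\<close>

lemma integral_ipw_residual_score_treated:
  fixes h :: "'x \<Rightarrow> real" and a :: 'a
  assumes h[measurable]: "h \<in> borel_measurable borel" and bnd: "AE z in P. \<bar>h (obsX z)\<bar> \<le> K"
  defines "f \<equiv> \<lambda>x. h x / pi a x * mu_sub_deriv a x"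
  shows "integrable P (\<lambda>z. h (obsX z) * ipw_residual a z * s z)"
    "integrable P (\<lambda>z. indicator {a} (obsA z) * f (obsX z))"
    "(\<integral>z. h (obsX z) * ipw_residual a z * s z \<partial>P) = (\<integral>z. indicator {a} (obsA z) * f (obsX z) \<partial>P)"
proof -
  define w where "w y = indicator {a} (fst y) * h (snd y) / pi a (snd y)" for y :: "'a \<times> 'x"
  define wm where "wm y = w y * mu (fst y) (snd y)" for y
  have [measurable]: "w \<in> borel_measurable AX" unfolding w_def[abs_def] by measurable
  have [measurable]: "wm \<in> borel_measurable AX"
    using borel_measurable_AX_split[of mu] unfolding wm_def[abs_def] by measurable
  have w_bnd: "AE z in P. \<bar>w (snd z)\<bar> \<le> \<bar>K\<bar> / \<epsilon>"
    using bnd pos[rule_format, of a]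
  proof eventually_elim
    case (elim z)
    have "\<bar>h (obsX z)\<bar> / pi a (obsX z) \<le> \<bar>K\<bar> / \<epsilon>"
      using elim eps by (intro frac_le) auto
    then show ?case
      using elim eps by (cases "obsA z = a") (simp_all add: w_def snd_obs abs_mult abs_div)
  qed
  have wm_bnd: "AE z in P. \<bar>wm (snd z)\<bar> \<le> \<bar>K\<bar> / \<epsilon> * \<bar>B\<bar>"
    using w_bnd mu_bounded
  proof eventually_elim
    case (elim z)
    then show ?case
      unfolding wm_def abs_mult using elim(2)[rule_format, of "obsA z"]
      by (intro mult_mono) (auto simp: snd_obs intro: order.trans[OF _ abs_ge_self])
  qed
  have Ysw: "integrable P (\<lambda>z. obsY z * s z * w (snd z))"
    by (rule integrable_mult_bounded_AE[OF integrable_Ys _ w_bnd]) measurable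
  have swm: "integrable P (\<lambda>z. s z * wm (snd z))"
    by (rule integrable_mult_bounded_AE[OF integrable_s _ wm_bnd]) measurable
  note Hw = integral_cond_Ys[OF _ Ysw] and Gwm = integral_cond_s[OF _ swm]
  have residual: "h (obsX z) * ipw_residual a z * s z = obsY z * s z * w (snd z) - s z * wm (snd z)" for z
    by (cases "obsA z = a") (simp_all add: ipw_residual_def w_def wm_def snd_obs algebra_simps)
  have deriv: "cond_Ys (snd z) * w (snd z) - cond_s (snd z) * wm (snd z) = indicator {a} (obsA z) * f (obsX z)"
    for z
    by (cases "obsA z = a") (simp_all add: w_def wm_def snd_obs f_def mu_sub_deriv_def algebra_simps)
  show "integrable P (\<lambda>z. h (obsX z) * ipw_residual a z * s z)"
    unfolding residual using Ysw swm by simp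
  show "integrable P (\<lambda>z. indicator {a} (obsA z) * f (obsX z))"
    unfolding deriv[symmetric] using Hw(1) Gwm(1) by simp
  have "(\<integral>z. h (obsX z) * ipw_residual a z * s z \<partial>P)
      = (\<integral>z. obsY z * s z * w (snd z) \<partial>P) - (\<integral>z. s z * wm (snd z) \<partial>P)"
    unfolding residual using Ysw swm by simp
  also have "\<dots> = (\<integral>z. indicator {a} (obsA z) * f (obsX z) \<partial>P)"
    unfolding deriv[symmetric] using Hw Gwm by simp
  finally show "(\<integral>z. h (obsX z) * ipw_residual a z * s z \<partial>P)
      = (\<integral>z. indicator {a} (obsA z) * f (obsX z) \<partial>P)" .
qed

lemma integral_ipw_residual_score:
  fixes h :: "'x \<Rightarrow> real"
  assumes h[measurable]: "h \<in> borel_measurable borel" and bnd: "AE z in P. \<bar>h (obsX z)\<bar> \<le> K"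
  shows "integrable P (\<lambda>z. h (obsX z) * ipw_residual a z * s z)"
    "integrable P (\<lambda>z. h (obsX z) * mu_sub_deriv a (obsX z))"
    "(\<integral>z. h (obsX z) * ipw_residual a z * s z \<partial>P) = (\<integral>z. h (obsX z) * mu_sub_deriv a (obsX z) \<partial>P)"
proof -
  define f where "f x = h x / pi a x * mu_sub_deriv a x" for x
  have [measurable]: "f \<in> borel_measurable borel" unfolding f_def[abs_def] by measurable
  note treated = integral_ipw_residual_score_treated[OF h bnd, where a=a, folded f_def]
  show "integrable P (\<lambda>z. h (obsX z) * ipw_residual a z * s z)" by (rule treated(1))
  have "integrable P (\<lambda>z. mu_sub_deriv a (obsX z))"
    by (rule square_integrable_imp_integrable[OF _ square_integrable_mu_sub_deriv]) measurable
  then have "integrable P (\<lambda>z. mu_sub_deriv a (obsX z) * h (obsX z))"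
    by (rule integrable_mult_bounded_AE[OF _ _ bnd]) measurable
  then show "integrable P (\<lambda>z. h (obsX z) * mu_sub_deriv a (obsX z))"
    by (simp add: mult.commute)
  have "(\<integral>z. h (obsX z) * ipw_residual a z * s z \<partial>P) = (\<integral>z. pi a (obsX z) * f (obsX z) \<partial>P)"
    unfolding treated(3) by (rule integral_treated_eq_propensity(2)[OF _ treated(2)]) measurable
  also have "\<dots> = (\<integral>z. h (obsX z) * mu_sub_deriv a (obsX z) \<partial>P)"
  proof (rule integral_cong_AE)
    show "AE z in P. pi a (obsX z) * f (obsX z) = h (obsX z) * mu_sub_deriv a (obsX z)"
      using pos[rule_format, of a] by eventually_elim (use eps in \<open>simp add: f_def\<close>)
  qed measurable
  finally show "(\<integral>z. h (obsX z) * ipw_residual a z * s z \<partial>P)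
      = (\<integral>z. h (obsX z) * mu_sub_deriv a (obsX z) \<partial>P)" .
qed

lemma integral_varphiC_score:
  "(\<integral>z. (varphiC pi mu Cs z - (\<integral>w. varphiC pi mu Cs w \<partial>P)) * s z \<partial>P)
     = (\<integral>z. risk_deriv_integrand z \<partial>P)"
proof -
  obtain D where "0 \<le> D" and D: "AE z in P. \<forall>a. \<bar>mu a (obsX z)\<bar> \<le> D \<and>
    \<bar>mu a (obsX z) - nearest_mu a (obsX z)\<bar> \<le> D \<and> \<epsilon> \<le> pi a (obsX z)"
    by (rule AE_bounds)
  define h where "h a x = 2 * (mu a x - nearest_mu a x)" for a x
  have [measurable]: "h a \<in> borel_measurable borel" for a unfolding h_def[abs_def] by measurable
  have "AE z in P. \<bar>h a (obsX z)\<bar> \<le> 2 * D" for a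
    using D
  proof eventually_elim
    case (elim z)
    then have "\<bar>mu a (obsX z) - nearest_mu a (obsX z)\<bar> \<le> D" by blast
    then show ?case unfolding h_def abs_mult by simp
  qed
  note ipw = integral_ipw_residual_score[OF _ this]
  have loss_s: "integrable P (\<lambda>z. loss (vecf mu (obsX z)) * s z)"
    using integrable_mult_bounded_AE[OF integrable_loss_mu s_meas, where c=Ms] s_bnd by simp
  have varphiC_s: "integrable P (\<lambda>z. varphiC pi mu Cs z * s z)"
    using integrable_mult_bounded_AE[OF integrable_varphiC s_meas, where c=Ms] s_bnd by simp
  have "(\<integral>z. (varphiC pi mu Cs z - (\<integral>w. varphiC pi mu Cs w \<partial>P)) * s z \<partial>P)
      = (\<integral>z. varphiC pi mu Cs z * s z \<partial>P)"
    using varphiC_s integrable_s s_mean by (simp add: left_diff_distrib)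
  also have "\<dots> = (\<integral>z. loss (vecf mu (obsX z)) * s z
      + (\<Sum>a\<in>UNIV. h a (obsX z) * ipw_residual a z * s z) \<partial>P)"
    by (simp add: varphiC_eq h_def sum_distrib_right distrib_right)
  also have "\<dots> = (\<integral>z. loss (vecf mu (obsX z)) * s z \<partial>P)
      + (\<Sum>a\<in>UNIV. \<integral>z. h a (obsX z) * mu_sub_deriv a (obsX z) \<partial>P)"
    using loss_s ipw(1) by (simp add: ipw(3))
  also have "\<dots> = (\<integral>z. risk_deriv_integrand z \<partial>P)"
    using loss_s ipw(2) by (simp add: risk_deriv_integrand_def h_def)
  finally show ?thesis .
qed

end

context counterfactual_clustering
begin

theorem eif_nonpar_varphiC:
  "eif_nonpar P (\<lambda>R. psi R Cs) (\<lambda>z. varphiC pi mu Cs z - (\<integral>w. varphiC pi mu Cs w \<partial>P))"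
  unfolding eif_nonpar_def
proof (intro conjI allI impI)
  fix s :: "real \<times> 'a \<times> 'x \<Rightarrow> real"
  assume s: "s \<in> borel_measurable P \<and> (\<exists>M. \<forall>z\<in>space P. \<bar>s z\<bar> \<le> M) \<and> (\<integral>z. s z \<partial>P) = 0"
  then obtain M where M: "\<forall>z\<in>space P. \<bar>s z\<bar> \<le> M" by blast
  have "\<bar>s z\<bar> \<le> M" for z using M[unfolded space_P] by blast
  then have "\<bar>s z\<bar> \<le> max M 1" for z by (simp add: le_max_iff_disj)
  then interpret bounded_score P mu pi \<epsilon> B Cs s "max M 1"
    using s by unfold_locales simp_all
  show "((\<lambda>t. psi (density P (\<lambda>z. ennreal (1 + t * s z))) Cs) has_real_derivative
      (\<integral>z. (varphiC pi mu Cs z - (\<integral>w. varphiC pi mu Cs w \<partial>P)) * s z \<partial>P)) (at 0)"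
    unfolding integral_varphiC_score by (rule psi_has_derivative)
qed (fact centered_varphiC)+

end

lemma AE_notin_margin_nbhd_0:
  assumes P: "prob_space P" and X: "obsX \<in> measurable P borel" and mu: "\<And>a. mu a \<in> borel_measurable borel"
    and margin: "margin_condition P mu k \<kappa> \<alpha>" "0 \<le> \<kappa>"
    and C: "C \<in> opt_codebooks P mu k"
  shows "AE z in P. vecf mu (obsX z) \<notin> margin_nbhd C 0"
proof -
  interpret prob_space P by (rule P)
  have "finite C" using C unfolding opt_codebooks_def codebooks_def by blast
  have "(\<lambda>z. vecf mu (obsX z)) \<in> borel_measurable P"
    using measurable_compose[OF X borel_measurable_vecf[of mu, OF mu]] by (simp add: comp_def)
  from measurable_sets[OF this margin_nbhd_borel[OF \<open>finite C\<close>, of 0]]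
  have N: "{z\<in>space P. vecf mu (obsX z) \<in> margin_nbhd C 0} \<in> sets P"
    by (simp add: vimage_def Int_def conj_commute)
  obtain K where "measure P {z\<in>space P. vecf mu (obsX z) \<in> margin_nbhd C 0} \<le> K * 0 powr \<alpha>"
    using margin C unfolding margin_condition_def by blast
  \<comment> \<open>0 powr \<alpha> = 0 for every \<alpha>\<close>
  then have "measure P {z\<in>space P. vecf mu (obsX z) \<in> margin_nbhd C 0} = 0"
    using measure_nonneg[of P "{z\<in>space P. vecf mu (obsX z) \<in> margin_nbhd C 0}"] by simp
  then show ?thesis
    by (intro AE_I[OF _ _ N]) (use N emeasure_eq_measure in auto)
qed

theorem lemma4:
  fixes P :: "(real \<times> 'a::finite \<times> 'x::euclidean_space) measure"
    and mu pi :: "'a \<Rightarrow> 'x \<Rightarrow> real"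
    and k :: nat and \<kappa> \<alpha> B \<epsilon> :: real
    and Q :: "'w measure" and muhat :: "nat \<Rightarrow> 'w \<Rightarrow> 'a \<Rightarrow> 'x \<Rightarrow> real"
    and Cs :: "(real^'a) set"
  assumes P: "prob_space P"
    and sets_P: "sets P = sets (borel \<Otimes>\<^sub>M (count_space UNIV \<Otimes>\<^sub>M borel))"
    and Y_L2: "integrable P (\<lambda>z. (obsY z)\<^sup>2)"
    and propens: "is_propensity P pi"
    and regr: "is_regression P mu"
    and pos: "\<epsilon> > 0" "\<forall>a. AE z in P. pi a (obsX z) \<ge> \<epsilon>"
    and A1_mu: "AE z in P. \<forall>a. \<bar>mu a (obsX z)\<bar> \<le> B"
    and Q: "prob_space Q"
    and A1_muhat: "\<forall>n. AE \<omega> in Q. \<forall>a x. \<bar>muhat n \<omega> a x\<bar> \<le> B"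
    and A2: "\<forall>e>0. \<forall>\<delta>>0. eventually (\<lambda>n. \<exists>E\<in>sets Q.
               {\<omega>\<in>space Q. \<exists>a x. \<bar>muhat n \<omega> a x - mu a x\<bar> > e} \<subseteq> E \<and> measure Q E \<le> \<delta>)
             sequentially"
    and margin: "\<kappa> > 0" "\<alpha> > 0" "margin_condition P mu k \<kappa> \<alpha>"
    and optC: "Cs \<in> opt_codebooks P mu k"
  shows "eif_nonpar P (\<lambda>R. psi R Cs) (\<lambda>z. varphiC pi mu Cs z - (\<integral>w. varphiC pi mu Cs w \<partial>P))"
proof -
  have X: "obsX \<in> measurable P borel"
    unfolding measurable_cong_sets[OF sets_P refl] obsX_def[abs_def] by measurable
  have mu: "mu a \<in> borel_measurable borel" for a
    using regr unfolding is_regression_def by blast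
  have "finite Cs" using optC unfolding opt_codebooks_def codebooks_def by blast
  moreover have "AE z in P. vecf mu (obsX z) \<notin> margin_nbhd Cs 0"
    using AE_notin_margin_nbhd_0[OF P X mu margin(3) _ optC] margin(1) by simp
  ultimately interpret counterfactual_clustering P mu pi \<epsilon> B Cs
    unfolding counterfactual_clustering_def counterfactual_clustering_axioms_def
    using P sets_P Y_L2 propens regr pos A1_mu by blast
  show ?thesis by (rule eif_nonpar_varphiC)
qed

end
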